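(* Let $n\ge1$, $m \ge 1$ be integers and $\lambda > 1$, $\sigma > 1$ real numbers, and let $a_\alpha$, $a$, $b$ be as in the context. There is a constant $C > 0$ depending only on $n, m, \lambda, \sigma$ such that for every solution $u$ of the inequality $\sum_{|\alpha| = m} (-1)^m \partial^\alpha a_\alpha(x, u) \ge b(x) |u|^\lambda$ in $\mathbb{R}^n$ and all real numbers $0 < r_1 < r_2$ with $r_2 \le \sqrt{\sigma}\, r_1$, $$J(r_2) - J(r_1) \ge C (r_2 - r_1)^{\lambda m} r_1^{(1-\lambda) n} \sup_{(r_1, r_2)} h \; J^\lambda(r_1),$$ where $J$ and $h$ are defined in the context.
   Context: For each multi-index $\alpha$ with $|\alpha| = m$, $a_\alpha : \mathbb{R}^n \times \mathbb{R} \to \mathbb{R}$ is a given function and $\partial^\alpha = \partial^{|\alpha|}/\partial x_1^{\alpha_1}\cdots\partial x_n^{\alpha_n}$. The function $b : \mathbb{R}^n \to (0,\infty)$ is positive measurable, and $a : \mathbb{R}^n \to (0,\infty)$ is positive measurable with $|a_\alpha(x,\zeta)| \le a(x)|\zeta|$ for almost all $x$, all $\zeta \in \mathbb{R}$, all $|\alpha|=m$. $B_r$ is the open ball of radius $r$ centered at $0$ in $\mathbb{R}^n$. A solution is a function $u$ with $b|u|^\lambda \in L_{1,loc}(\mathbb{R}^n)$, $a_\alpha(x,u) \in L_{1,loc}(\mathbb{R}^n)$ for all $|\alpha|=m$, and $\int_{\mathbb{R}^n} \sum_{|\alpha|=m} a_\alpha(x,u)\partial^\alpha\varphi\,dx \ge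 \int_{\mathbb{R}^n} b|u|^\lambda \varphi\,dx$ for all non-negative $\varphi \in C_0^\infty(\mathbb{R}^n)$. For $r>0$: $J(r) = \int_{B_r} b(x)|u|^\lambda\,dx$ and $$h(r) = \left( \frac{1}{r^n} \int_{B_{\sqrt{\sigma} r} \setminus B_{r/\sqrt{\sigma}}} a^{\lambda/(\lambda-1)}(x) b^{-1/(\lambda-1)}(x)\,dx \right)^{1-\lambda},$$ with $h(r) = 0$ if the integral equals $\infty$. *)

theory Defs
  imports "HOL-Analysis.Analysis"
begin

text \<open>Points of R^n are vectors of type real^'n (n = CARD('n)).
  A multi-index is a function 'n \<Rightarrow> nat; its order is the sum of its entries.\<close>

definition mi_order :: "('n::finite \<Rightarrow> nat) \<Rightarrow> nat" where
  "mi_order \<alpha> = (\<Sum>i\<in>UNIV. \<alpha> i)"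

definition partial_dir :: "'n::finite \<Rightarrow> (real^'n \<Rightarrow> real) \<Rightarrow> real^'n \<Rightarrow> real" where
  "partial_dir i f x = deriv (\<lambda>t. f (x + t *\<^sub>R axis i 1)) 0"

fun iter_partial :: "'n::finite list \<Rightarrow> (real^'n \<Rightarrow> real) \<Rightarrow> real^'n \<Rightarrow> real" where
  "iter_partial [] f = f"
| "iter_partial (i # is) f = partial_dir i (iter_partial is f)"

text \<open>The mixed partial derivative \<partial>^\<alpha>: differentiate \<alpha> i times in direction i
  (for smooth functions the order is irrelevant).\<close>
definition mpartial :: "('n::finite \<Rightarrow> nat) \<Rightarrow> (real^'n \<Rightarrow> real) \<Rightarrow> real^'n \<Rightarrow> real" where
  "mpartial \<alpha> f = iter_partial (SOME is. \<forall>i. count_list is i = \<alpha> i) f"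

definition smooth_fun :: "(real^'n::finite \<Rightarrow> real) \<Rightarrow> bool" where
  "smooth_fun f \<longleftrightarrow> (\<forall>is. continuous_on UNIV (iter_partial is f) \<and>
      (\<forall>i x. (\<lambda>t. iter_partial is f (x + t *\<^sub>R axis i 1)) differentiable (at 0)))"

definition test_fun :: "(real^'n::finite \<Rightarrow> real) \<Rightarrow> bool" where
  "test_fun f \<longleftrightarrow> smooth_fun f \<and> compact (closure {x. f x \<noteq> 0})"

definition loc_integrable :: "(real^'n::finite \<Rightarrow> real) \<Rightarrow> bool" where
  "loc_integrable f \<longleftrightarrow> (\<forall>K. compact K \<longrightarrow> set_integrable lborel K f)"

text \<open>Solutions of  \<Sum>_{|\<alpha>|=m} (-1)^m \<partial>^\<alpha> a_\<alpha>(x,u) \<ge> b |u|^lam  in the weak sense.\<close>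
definition is_solution ::
  "nat \<Rightarrow> real \<Rightarrow> (('n::finite \<Rightarrow> nat) \<Rightarrow> real^'n \<Rightarrow> real \<Rightarrow> real) \<Rightarrow> (real^'n \<Rightarrow> real)
     \<Rightarrow> (real^'n \<Rightarrow> real) \<Rightarrow> bool" where
  "is_solution m lam aa b u \<longleftrightarrow>
     loc_integrable (\<lambda>x. b x * \<bar>u x\<bar> powr lam) \<and>
     (\<forall>\<alpha>. mi_order \<alpha> = m \<longrightarrow> loc_integrable (\<lambda>x. aa \<alpha> x (u x))) \<and>
     (\<forall>\<phi>. test_fun \<phi> \<and> (\<forall>x. \<phi> x \<ge> 0) \<longrightarrow>
        (\<integral>x. (\<Sum>\<alpha>\<in>{\<alpha>. mi_order \<alpha> = m}. aa \<alpha> x (u x) * mpartial \<alpha> \<phi> x) \<partial>lborel)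
          \<ge> (\<integral>x. b x * \<bar>u x\<bar> powr lam * \<phi> x \<partial>lborel))"

definition J_fun :: "real \<Rightarrow> (real^'n::finite \<Rightarrow> real) \<Rightarrow> (real^'n \<Rightarrow> real) \<Rightarrow> real \<Rightarrow> real" where
  "J_fun lam b u r = (LINT x:ball 0 r|lborel. b x * \<bar>u x\<bar> powr lam)"

definition h_fun :: "real \<Rightarrow> real \<Rightarrow> (real^'n::finite \<Rightarrow> real) \<Rightarrow> (real^'n \<Rightarrow> real) \<Rightarrow> real \<Rightarrow> real" where
  "h_fun lam \<sigma> a b r =
     (let I = (\<integral>\<^sup>+ x \<in> ball 0 (sqrt \<sigma> * r) - ball 0 (r / sqrt \<sigma>).
                 ennreal (a x powr (lam / (lam - 1)) * b x powr (- 1 / (lam - 1))) \<partial>lborel)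
      in if I = \<infinity> then 0 else (enn2real I / r ^ CARD('n)) powr (1 - lam))"

end

theory Submission
  imports Defs "HOL-Computational_Algebra.Polynomial"
begin

text \<open>
  Test the inequality with \<phi> = H(z)^N, where H is a smooth step from 1 (z \<le> 0) to 0 (z \<ge> 1)
  and z = (|x|^2 - r1^2) / (r2^2 - r1^2). Then \<phi> = 1 on B(r1), \<phi> = 0 outside B(r2), and since
  every derivative of H^N of order at most m keeps a factor H^(N-m) with N - m \<ge> N / lam, one gets
  |\<partial>^\<alpha> \<phi>| \<le> K (r2 - r1)^(-m) \<phi>^(1/lam) on the annulus A = B(r2) - B(r1).
  Young's inequality with a parameter e splits a|u| |\<partial>^\<alpha> \<phi>| into e b|u|^lam \<phi>, whose integral is
  at most J(r2) - J(r1), plus e^(-1/(lam-1)) K^(lam/(lam-1)) a^(lam/(lam-1)) b^(-1/(lam-1)) on A;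
  the weak inequality bounds J(r1) by the integral of b|u|^lam \<phi>. Optimising in e gives
  J(r1)^lam \<le> C (r2 - r1)^(-lam m) (\<integral>_A a^(lam/(lam-1)) b^(-1/(lam-1)))^(lam-1) (J(r2) - J(r1)),
  and for r1 < r < r2 the annulus A lies in B(sqrt \<sigma> r) - B(r / sqrt \<sigma>), the region defining h(r).
\<close>

section \<open>Smooth functions of one variable\<close>

definition flat_exp :: "real poly \<Rightarrow> real \<Rightarrow> real" where
  "flat_exp p t = (if t > 0 then poly p (1/t) * exp (-1/t) else 0)"

definition flat_exp_dpoly :: "real poly \<Rightarrow> real poly" where
  "flat_exp_dpoly p = [:0,0,1:] * (p - pderiv p)"

lemma tendsto_poly_mult_exp_neg_at_top: "((\<lambda>y. poly q y * exp (-y)) \<longlongrightarrow> (0::real)) at_top"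
proof -
  have e: "(\<lambda>y. poly q y * exp (-y)) = (\<lambda>y. \<Sum>i\<le>degree q. coeff q i * (y ^ i / exp y))"
    by (auto simp: poly_altdef sum_divide_distrib exp_minus field_simps)
  have "((\<lambda>y. \<Sum>i\<le>degree q. coeff q i * (y ^ i / exp y)) \<longlongrightarrow> (\<Sum>i\<le>degree q. coeff q i * 0)) at_top"
    by (intro tendsto_intros tendsto_power_div_exp_0)
  then show ?thesis unfolding e by simp
qed

lemma tendsto_poly_inverse_mult_exp_at_right: "((\<lambda>t. poly q (1/t) * exp (-1/t)) \<longlongrightarrow> (0::real)) (at_right 0)"
proof -
  have "((\<lambda>t. poly q (inverse t) * exp (- inverse t)) \<longlongrightarrow> (0::real)) (at_right 0)"
    by (rule filterlim_compose[OF tendsto_poly_mult_exp_neg_at_top filterlim_inverse_at_top_right])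
  then show ?thesis by (simp add: divide_inverse)
qed

lemma flat_exp_has_derivative_0: "(flat_exp p has_real_derivative 0) (at 0)"
proof -
  have "((\<lambda>h. poly (pCons 0 p) (1/h) * exp (-1/h)) \<longlongrightarrow> 0) (at_right 0)"
    by (rule tendsto_poly_inverse_mult_exp_at_right)
  moreover have "eventually (\<lambda>h. poly (pCons 0 p) (1/h) * exp (-1/h) = (flat_exp p h - flat_exp p 0) / (h - 0))
      (at_right (0::real))"
    using eventually_at_right_less[of 0] by eventually_elim (simp add: flat_exp_def)
  ultimately have right: "((\<lambda>h. (flat_exp p h - flat_exp p 0) / (h - 0)) \<longlongrightarrow> 0) (at_right 0)"
    by (rule Lim_transform_eventually)
  have "eventually (\<lambda>h. h \<in> {-1<..<0}) (at_left (0::real))"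
    by (rule eventually_at_left_real) simp
  then have "eventually (\<lambda>h. 0 = (flat_exp p h - flat_exp p 0) / (h - 0)) (at_left (0::real))"
    by eventually_elim (simp add: flat_exp_def)
  then have left: "((\<lambda>h. (flat_exp p h - flat_exp p 0) / (h - 0)) \<longlongrightarrow> 0) (at_left 0)"
    by (rule Lim_transform_eventually[OF tendsto_const])
  show ?thesis
    unfolding has_field_derivative_iff by (rule filterlim_split_at[OF left right])
qed

lemma flat_exp_has_derivative: "(flat_exp p has_real_derivative flat_exp (flat_exp_dpoly p) t) (at t)"
proof -
  consider "t = 0" | "t > 0" | "t < 0" by linarith
  then show ?thesis
  proof cases
    case 1
    then show ?thesis using flat_exp_has_derivative_0 by (simp add: flat_exp_def)
  next
    case 2
    have d: "((\<lambda>t. poly p (1/t) * exp (-1/t)) has_real_derivative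
        poly (pderiv p) (1/t) * (- 1 / t^2) * exp (-1/t) + poly p (1/t) * (exp (-1/t) * (1/t^2))) (at t)"
      using 2 by (auto intro!: derivative_eq_intros simp: power2_eq_square field_simps)
    have e: "poly (pderiv p) (1/t) * (- 1 / t^2) * exp (-1/t) + poly p (1/t) * (exp (-1/t) * (1/t^2))
        = flat_exp (flat_exp_dpoly p) t"
      using 2 by (simp add: flat_exp_def flat_exp_dpoly_def algebra_simps power2_eq_square divide_inverse)
    show ?thesis
      by (rule has_field_derivative_transform_within_open[of _ _ _ "{0<..}"])
         (use d e 2 in \<open>auto simp: flat_exp_def\<close>)
  next
    case 3
    show ?thesis
      by (rule has_field_derivative_transform_within_open[of "\<lambda>_. 0" _ _ "{..<0}"])
         (use 3 in \<open>auto simp: flat_exp_def\<close>)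
  qed
qed

text \<open>
  smooth_real and smooth_vec are classes of explicitly built C-infinity functions, each closed under
  (partial) differentiation; membership certifies the smoothness of the cutoff function.
\<close>

inductive smooth_real :: "(real \<Rightarrow> real) \<Rightarrow> bool" where
  smooth_real_const: "smooth_real (\<lambda>_. c)"
| smooth_real_flat_exp: "smooth_real (flat_exp p)"
| smooth_real_affine: "smooth_real f \<Longrightarrow> smooth_real (\<lambda>t. f (a * t + b))"
| smooth_real_add: "smooth_real f \<Longrightarrow> smooth_real g \<Longrightarrow> smooth_real (\<lambda>t. f t + g t)"
| smooth_real_mult: "smooth_real f \<Longrightarrow> smooth_real g \<Longrightarrow> smooth_real (\<lambda>t. f t * g t)"
| smooth_real_inverse: "smooth_real f \<Longrightarrow> (\<forall>t. f t \<noteq> 0) \<Longrightarrow> smooth_real (\<lambda>t. inverse (f t))"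

lemma smooth_real_has_smooth_derivative:
  "smooth_real f \<Longrightarrow> \<exists>f'. smooth_real f' \<and> (\<forall>t. (f has_real_derivative f' t) (at t))"
proof (induction rule: smooth_real.induct)
  case (smooth_real_const c)
  show ?case by (intro exI[of _ "\<lambda>_. 0"]) (auto intro: smooth_real.intros)
next
  case (smooth_real_flat_exp p)
  show ?case
    by (intro exI[of _ "flat_exp (flat_exp_dpoly p)"]) (auto intro: smooth_real.intros flat_exp_has_derivative)
next
  case (smooth_real_affine f a b)
  then obtain f' where f': "smooth_real f'" "\<forall>t. (f has_real_derivative f' t) (at t)" by blast
  have "((\<lambda>t. f (a * t + b)) has_real_derivative f' (a * t + b) * a) (at t)" for t
    using DERIV_chain2[OF f'(2)[rule_format] DERIV_cmult_Id[THEN DERIV_add, OF DERIV_const]] by simp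
  with f'(1) show ?case
    by (intro exI[of _ "\<lambda>t. f' (a * t + b) * a"]) (auto intro: smooth_real.intros)
next
  case (smooth_real_add f g)
  then obtain f' g' where "smooth_real f'" "\<forall>t. (f has_real_derivative f' t) (at t)"
     "smooth_real g'" "\<forall>t. (g has_real_derivative g' t) (at t)" by blast
  then show ?case
    by (intro exI[of _ "\<lambda>t. f' t + g' t"]) (auto intro: smooth_real.intros DERIV_add)
next
  case (smooth_real_mult f g)
  then obtain f' g' where "smooth_real f'" "smooth_real g'"
    and f': "\<forall>t. (f has_real_derivative f' t) (at t)" and g': "\<forall>t. (g has_real_derivative g' t) (at t)"
    by blast
  with smooth_real_mult.hyps show ?case
    by (intro exI[of _ "\<lambda>t. f t * g' t + f' t * g t"]) (auto intro: smooth_real.intros DERIV_mult')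
next
  case (smooth_real_inverse f)
  then obtain f' where f': "smooth_real f'" "\<forall>t. (f has_real_derivative f' t) (at t)" by blast
  have "smooth_real (\<lambda>t. (- 1) * (f' t * (inverse (f t) * inverse (f t))))"
    by (intro smooth_real.intros f' smooth_real_inverse)
  moreover have "((\<lambda>t. inverse (f t)) has_real_derivative (- 1) * (f' t * (inverse (f t) * inverse (f t)))) (at t)" for t
    using DERIV_inverse_fun[OF f'(2)[rule_format, of t]] smooth_real_inverse(2)
    by (simp add: power2_eq_square)
  ultimately show ?case by blast
qed

lemma smooth_real_deriv: "smooth_real f \<Longrightarrow> smooth_real (deriv f) \<and> (\<forall>t. (f has_real_derivative deriv f t) (at t))"
proof -
  assume "smooth_real f"
  then obtain f' where f': "smooth_real f'" "\<forall>t. (f has_real_derivative f' t) (at t)"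
    using smooth_real_has_smooth_derivative by blast
  then have "deriv f = f'" by (auto intro!: DERIV_imp_deriv)
  then show ?thesis using f' by simp
qed

lemma smooth_real_higher_deriv: "smooth_real f \<Longrightarrow> smooth_real ((deriv ^^ j) f)"
  by (induction j) (auto dest: smooth_real_deriv)

lemma smooth_real_higher_deriv_has_derivative: "smooth_real f \<Longrightarrow> ((deriv ^^ j) f has_real_derivative (deriv ^^ Suc j) f t) (at t)"
  using smooth_real_deriv[OF smooth_real_higher_deriv] by auto

lemma smooth_real_continuous_on: "smooth_real f \<Longrightarrow> continuous_on UNIV f"
  using smooth_real_deriv by (meson DERIV_isCont continuous_at_imp_continuous_on)

lemma smooth_real_power: "smooth_real f \<Longrightarrow> smooth_real (\<lambda>t. f t ^ k)"
proof (induction k)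
  case 0
  then show ?case using smooth_real_const[of 1] by simp
next
  case (Suc k)
  then show ?case using smooth_real_mult[OF Suc.prems Suc.IH] by (simp add: mult.commute)
qed

definition smooth_step :: "real \<Rightarrow> real" where
  "smooth_step z = flat_exp 1 (1 - z) * inverse (flat_exp 1 (1 - z) + flat_exp 1 z)"

lemma flat_exp_1_pos: "t > 0 \<Longrightarrow> flat_exp 1 t > 0" and flat_exp_1_eq_0: "t \<le> 0 \<Longrightarrow> flat_exp 1 t = 0"
  by (auto simp: flat_exp_def)

lemma flat_exp_1_nonneg: "flat_exp 1 t \<ge> 0"
  by (auto simp: flat_exp_def)

lemma smooth_step_denom_pos: "flat_exp 1 (1 - z) + flat_exp 1 z > 0"
proof (cases "z > 0")
  case True then show ?thesis using flat_exp_1_pos[of z] flat_exp_1_nonneg[of "1-z"] by linarith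
next
  case False then show ?thesis using flat_exp_1_pos[of "1-z"] flat_exp_1_nonneg[of z] by linarith
qed

lemma smooth_real_smooth_step: "smooth_real smooth_step"
proof -
  have a: "smooth_real (\<lambda>z. flat_exp 1 ((-1) * z + 1))" by (intro smooth_real.intros)
  have b: "smooth_real (\<lambda>z. flat_exp 1 (1 * z + 0))" by (intro smooth_real.intros)
  have "smooth_real (\<lambda>z. flat_exp 1 ((-1) * z + 1) * inverse (flat_exp 1 ((-1) * z + 1) + flat_exp 1 (1 * z + 0)))"
  proof (intro smooth_real.intros a b allI)
    fix t
    show "flat_exp 1 ((-1) * t + 1) + flat_exp 1 (1 * t + 0) \<noteq> 0" using smooth_step_denom_pos[of t] by simp
  qed
  then show ?thesis unfolding smooth_step_def by simp
qed

lemma smooth_step_nonneg: "smooth_step z \<ge> 0" and smooth_step_le_1: "smooth_step z \<le> 1"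
  using smooth_step_denom_pos[of z] flat_exp_1_nonneg[of z] flat_exp_1_nonneg[of "1-z"]
  by (auto simp: smooth_step_def field_simps)

lemma smooth_step_left: "z \<le> 0 \<Longrightarrow> smooth_step z = 1"
  using smooth_step_denom_pos[of z] by (auto simp: smooth_step_def flat_exp_1_eq_0)

lemma smooth_step_right: "z \<ge> 1 \<Longrightarrow> smooth_step z = 0"
  by (auto simp: smooth_step_def flat_exp_1_eq_0)

definition step_pow :: "nat \<Rightarrow> real \<Rightarrow> real" where
  "step_pow N z = smooth_step z ^ N"

lemma smooth_real_step_pow: "smooth_real (step_pow N)"
  unfolding step_pow_def by (rule smooth_real_power[OF smooth_real_smooth_step])

lemma step_pow_nonneg: "step_pow N z \<ge> 0" and step_pow_le_1: "step_pow N z \<le> 1"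
  using smooth_step_nonneg[of z] smooth_step_le_1[of z] by (auto simp: step_pow_def power_le_one)

lemma step_pow_left: "z \<le> 0 \<Longrightarrow> step_pow N z = 1" and step_pow_right: "z \<ge> 1 \<Longrightarrow> N > 0 \<Longrightarrow> step_pow N z = 0"
  by (auto simp: step_pow_def smooth_step_left smooth_step_right)

lemma has_real_derivative_locally_const:
  assumes "(g has_real_derivative d) (at z)" "open U" "z \<in> U" "\<And>w. w \<in> U \<Longrightarrow> g w = c"
  shows "d = 0"
proof -
  have "((\<lambda>_. c) has_real_derivative 0) (at z)" by simp
  then have "(g has_real_derivative 0) (at z)"
    by (rule has_field_derivative_transform_within_open[OF _ assms(2,3)]) (use assms(4) in auto)
  then show ?thesis using assms(1) DERIV_unique by blast
qed

lemma smooth_real_higher_deriv_locally_const: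
  assumes "smooth_real f" "open U" "\<And>w. w \<in> U \<Longrightarrow> f w = c"
  shows "z \<in> U \<Longrightarrow> (deriv ^^ Suc j) f z = 0"
proof (induction j arbitrary: z)
  case 0
  show ?case using has_real_derivative_locally_const[OF smooth_real_higher_deriv_has_derivative[OF assms(1), of 0 z, simplified] assms(2) 0 assms(3)] by simp
next
  case (Suc j)
  show ?case
    using has_real_derivative_locally_const[OF smooth_real_higher_deriv_has_derivative[OF assms(1), of "Suc j" z] assms(2) Suc.prems Suc.IH]
    by simp
qed

lemma step_pow_higher_deriv_outside:
  assumes "j \<ge> 1" "N > 0" "z < 0 \<or> z > 1"
  shows "(deriv ^^ j) (step_pow N) z = 0"
proof -
  obtain j' where j: "j = Suc j'" using assms(1) by (cases j) auto
  show ?thesis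
  proof (cases "z < 0")
    case True
    show ?thesis unfolding j
      by (rule smooth_real_higher_deriv_locally_const[OF smooth_real_step_pow, where U="{..<0}" and c=1]) (use True step_pow_left in auto)
  next
    case False
    then have "z > 1" using assms(3) by auto
    show ?thesis unfolding j
      by (rule smooth_real_higher_deriv_locally_const[OF smooth_real_step_pow, where U="{1<..}" and c=0]) (use \<open>z > 1\<close> step_pow_right assms(2) in auto)
  qed
qed

lemma step_pow_higher_deriv_right: "1 < z \<Longrightarrow> 0 < N \<Longrightarrow> (deriv ^^ j) (step_pow N) z = 0"
  using step_pow_higher_deriv_outside[of j N z] step_pow_right[of z N] by (cases "j = 0") auto

lemma step_pow_higher_deriv_factor:
  "j \<le> N \<Longrightarrow> \<exists>R. smooth_real R \<and> (\<forall>z. (deriv ^^ j) (step_pow N) z = smooth_step z ^ (N - j) * R z)"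
proof (induction j)
  case 0
  then show ?case by (intro exI[of _ "\<lambda>_. 1"]) (auto simp: step_pow_def intro: smooth_real.intros)
next
  case (Suc j)
  then obtain R where R: "smooth_real R" "\<And>z. (deriv ^^ j) (step_pow N) z = smooth_step z ^ (N - j) * R z" by auto
  define R' where "R' = (\<lambda>z. of_nat (N - j) * deriv smooth_step z * R z + smooth_step z * deriv R z)"
  have gR': "smooth_real R'" unfolding R'_def
    by (intro smooth_real.intros R smooth_real_smooth_step smooth_real_deriv[THEN conjunct1])
  have eq: "(deriv ^^ j) (step_pow N) = (\<lambda>z. smooth_step z ^ (N - j) * R z)" using R(2) by auto
  have Nj: "N - j = Suc (N - Suc j)" using Suc.prems by simp
  show ?case
  proof (intro exI[of _ R'] conjI allI gR')
    fix z
    have dH: "(smooth_step has_real_derivative deriv smooth_step z) (at z)" using smooth_real_deriv[OF smooth_real_smooth_step] by auto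
    have dR: "(R has_real_derivative deriv R z) (at z)" using smooth_real_deriv[OF R(1)] by auto
    have dp: "((\<lambda>z. smooth_step z ^ (N - j)) has_real_derivative of_nat (N - j) * smooth_step z ^ (N - j - 1) * deriv smooth_step z) (at z)"
      using DERIV_power[OF dH, of "N - j"] by (simp add: algebra_simps)
    have "((\<lambda>z. smooth_step z ^ (N - j) * R z) has_real_derivative
        (of_nat (N - j) * smooth_step z ^ (N - j - 1) * deriv smooth_step z) * R z + smooth_step z ^ (N - j) * deriv R z) (at z)"
      using DERIV_mult'[OF dp dR] by (simp add: algebra_simps)
    then have "deriv (\<lambda>z. smooth_step z ^ (N - j) * R z) z
        = (of_nat (N - j) * smooth_step z ^ (N - j - 1) * deriv smooth_step z) * R z + smooth_step z ^ (N - j) * deriv R z"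
      by (rule DERIV_imp_deriv)
    also have "\<dots> = smooth_step z ^ (N - Suc j) * R' z"
      unfolding R'_def Nj by (simp add: algebra_simps)
    finally show "(deriv ^^ Suc j) (step_pow N) z = smooth_step z ^ (N - Suc j) * R' z"
      using eq by simp
  qed
qed

lemma smooth_step_power_le_powr:
  assumes "real k \<ge> e" "e > 0"
  shows "smooth_step z ^ k \<le> smooth_step z powr e"
proof (cases "smooth_step z = 0")
  case True
  have "k > 0" using assms by auto
  then show ?thesis using True by (simp add: zero_power)
next
  case False
  then have Hp: "smooth_step z > 0" using smooth_step_nonneg[of z] by linarith
  have "smooth_step z ^ k = smooth_step z powr real k" using powr_realpow[OF Hp] by simp
  also have "\<dots> \<le> smooth_step z powr e" by (rule powr_mono'[OF assms(1) smooth_step_nonneg smooth_step_le_1])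
  finally show ?thesis .
qed

lemma step_pow_powr: "lam > 0 \<Longrightarrow> N > 0 \<Longrightarrow> step_pow N z powr (1/lam) = smooth_step z powr (real N / lam)"
proof (cases "smooth_step z = 0")
  case True
  assume "N > 0"
  then show ?thesis using True by (simp add: step_pow_def zero_power)
next
  case False
  assume "lam > 0"
  then have Hp: "smooth_step z > 0" using smooth_step_nonneg[of z] False by linarith
  have "step_pow N z = smooth_step z powr real N" using powr_realpow[OF Hp] by (simp add: step_pow_def)
  then show ?thesis by (simp add: powr_powr)
qed

lemma step_pow_higher_deriv_le_powr:
  assumes "j \<le> m" "m \<le> N" "real N - real m \<ge> real N / lam" "lam > 1" "N > 0"
  shows "\<exists>L. \<forall>z. \<bar>(deriv ^^ j) (step_pow N) z\<bar> \<le> L * step_pow N z powr (1/lam)"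
proof (cases "j = 0")
  case True
  show ?thesis
  proof (intro exI[of _ 1] allI)
    fix z
    have "step_pow N z powr 1 \<le> step_pow N z powr (1/lam)"
      by (rule powr_mono'[OF _ step_pow_nonneg step_pow_le_1]) (use assms in auto)
    then show "\<bar>(deriv ^^ j) (step_pow N) z\<bar> \<le> 1 * step_pow N z powr (1 / lam)"
      using True step_pow_nonneg[of N z] by simp
  qed
next
  case False
  have jN: "j \<le> N" using assms by simp
  obtain R where R: "smooth_real R" "\<And>z. (deriv ^^ j) (step_pow N) z = smooth_step z ^ (N - j) * R z"
    using step_pow_higher_deriv_factor[OF jN] by auto
  have "compact (R ` {0..1})"
    by (rule compact_continuous_image[OF continuous_on_subset[OF smooth_real_continuous_on[OF R(1)]]]) auto
  then obtain B where B: "\<And>z. z \<in> {0..1} \<Longrightarrow> \<bar>R z\<bar> \<le> B"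
    using compact_imp_bounded bounded_real by (metis image_eqI)
  have lam0: "lam > 0" using assms by simp
  have e: "real (N - j) \<ge> real N / lam" using assms by simp
  have e0: "real N / lam > 0" using assms by simp
  show ?thesis
  proof (intro exI[of _ "\<bar>B\<bar>"] allI)
    fix z
    show "\<bar>(deriv ^^ j) (step_pow N) z\<bar> \<le> \<bar>B\<bar> * step_pow N z powr (1 / lam)"
    proof (cases "z \<in> {0..1}")
      case True
      have "\<bar>(deriv ^^ j) (step_pow N) z\<bar> = smooth_step z ^ (N - j) * \<bar>R z\<bar>"
        using R(2)[of z] smooth_step_nonneg[of z] by (simp add: abs_mult)
      also have "\<dots> \<le> smooth_step z powr (real N / lam) * \<bar>B\<bar>"
        by (intro mult_mono smooth_step_power_le_powr e e0) (use B[OF True] in auto)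
      finally show ?thesis using step_pow_powr[OF lam0 assms(5)] by (simp add: mult.commute)
    next
      case False
      then have "(deriv ^^ j) (step_pow N) z = 0"
        using step_pow_higher_deriv_outside[of j N z] \<open>j \<noteq> 0\<close> assms by auto
      then show ?thesis by simp
    qed
  qed
qed

section \<open>Smooth functions on R^n and the radial cutoff\<close>

inductive smooth_vec :: "(real^'n::finite \<Rightarrow> real) \<Rightarrow> bool" where
  smooth_vec_const: "smooth_vec (\<lambda>_. c)"
| smooth_vec_coord: "smooth_vec (\<lambda>x. x $ k)"
| smooth_vec_inner_self: "smooth_vec (\<lambda>x. x \<bullet> x)"
| smooth_vec_add: "smooth_vec f \<Longrightarrow> smooth_vec g \<Longrightarrow> smooth_vec (\<lambda>x. f x + g x)"
| smooth_vec_mult: "smooth_vec f \<Longrightarrow> smooth_vec g \<Longrightarrow> smooth_vec (\<lambda>x. f x * g x)"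
| smooth_vec_comp: "smooth_real g \<Longrightarrow> smooth_vec f \<Longrightarrow> smooth_vec (\<lambda>x. g (f x))"

lemma smooth_vec_continuous_on: "smooth_vec f \<Longrightarrow> continuous_on UNIV f"
proof (induction rule: smooth_vec.induct)
  case (smooth_vec_comp g f)
  then show ?case using continuous_on_compose2[OF smooth_real_continuous_on[OF smooth_vec_comp(1)] smooth_vec_comp(3)] by auto
qed (auto intro!: continuous_intros)

lemma has_real_derivative_inner_self_line:
  "((\<lambda>t. (x + t *\<^sub>R axis i 1) \<bullet> (x + t *\<^sub>R axis i (1::real))) has_real_derivative 2 * x $ i) (at 0)"
proof -
  have e: "(\<lambda>t. (x + t *\<^sub>R axis i 1) \<bullet> (x + t *\<^sub>R axis i (1::real))) = (\<lambda>t. x \<bullet> x + 2 * t * x $ i + t * t)"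
    by (auto simp: inner_add_left inner_add_right inner_axis inner_axis' inner_axis_axis inner_commute algebra_simps)
  show ?thesis unfolding e by (auto intro!: derivative_eq_intros)
qed

lemma smooth_vec_has_smooth_partial:
  "smooth_vec f \<Longrightarrow> \<exists>f'. smooth_vec f' \<and> (\<forall>x. ((\<lambda>t. f (x + t *\<^sub>R axis i 1)) has_real_derivative f' x) (at 0))"
proof (induction rule: smooth_vec.induct)
  case (smooth_vec_const c)
  show ?case by (intro exI[of _ "\<lambda>_. 0"]) (simp add: smooth_vec.smooth_vec_const)
next
  case (smooth_vec_coord k)
  show ?case
    by (intro exI[of _ "\<lambda>_. axis i 1 $ k"]) (auto intro: smooth_vec.intros intro!: derivative_eq_intros)
next
  case smooth_vec_inner_self
  show ?case
    by (intro exI[of _ "\<lambda>x. 2 * x $ i"])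
       (auto intro: smooth_vec.intros has_real_derivative_inner_self_line)
next
  case (smooth_vec_add f g)
  then obtain f' g' where "smooth_vec f'" "smooth_vec g'"
    "\<forall>x. ((\<lambda>t. f (x + t *\<^sub>R axis i 1)) has_real_derivative f' x) (at 0)"
    "\<forall>x. ((\<lambda>t. g (x + t *\<^sub>R axis i 1)) has_real_derivative g' x) (at 0)" by blast
  then show ?case
    by (intro exI[of _ "\<lambda>x. f' x + g' x"]) (auto intro: smooth_vec.intros DERIV_add)
next
  case (smooth_vec_mult f g)
  then obtain f' g' where "smooth_vec f'" "smooth_vec g'"
    and f': "\<forall>x. ((\<lambda>t. f (x + t *\<^sub>R axis i 1)) has_real_derivative f' x) (at 0)"
    and g': "\<forall>x. ((\<lambda>t. g (x + t *\<^sub>R axis i 1)) has_real_derivative g' x) (at 0)" by blast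
  moreover have "((\<lambda>t. f (x + t *\<^sub>R axis i 1) * g (x + t *\<^sub>R axis i 1)) has_real_derivative
      f x * g' x + f' x * g x) (at 0)" for x
    using DERIV_mult'[OF f'[rule_format, of x] g'[rule_format, of x]] by simp
  ultimately show ?case using smooth_vec_mult.hyps
    by (intro exI[of _ "\<lambda>x. f x * g' x + f' x * g x"]) (auto intro: smooth_vec.intros)
next
  case (smooth_vec_comp g f)
  then obtain f' where "smooth_vec f'" "\<forall>x. ((\<lambda>t. f (x + t *\<^sub>R axis i 1)) has_real_derivative f' x) (at 0)"
    by blast
  moreover have "smooth_real (deriv g)" "\<And>t. (g has_real_derivative deriv g t) (at t)"
    using smooth_real_deriv[OF smooth_vec_comp(1)] by auto
  ultimately show ?case using smooth_vec_comp.hyps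
    by (intro exI[of _ "\<lambda>x. deriv g (f x) * f' x"]) (auto intro: smooth_vec.intros DERIV_chain2)
qed

lemma smooth_vec_partial_dir:
  assumes "smooth_vec f"
  shows "smooth_vec (partial_dir i f) \<and> (\<forall>x. ((\<lambda>t. f (x + t *\<^sub>R axis i 1)) has_real_derivative partial_dir i f x) (at 0))"
proof -
  obtain f' where f': "smooth_vec f'" "\<forall>x. ((\<lambda>t. f (x + t *\<^sub>R axis i 1)) has_real_derivative f' x) (at 0)"
    using smooth_vec_has_smooth_partial[OF assms] by blast
  have "partial_dir i f = f'"
  proof (rule ext)
    fix x show "partial_dir i f x = f' x"
      unfolding partial_dir_def using f'(2) by (blast intro: DERIV_imp_deriv)
  qed
  then show ?thesis using f' by simp
qed

lemma smooth_vec_iter_partial: "smooth_vec f \<Longrightarrow> smooth_vec (iter_partial is f)"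
  by (induction "is") (simp_all add: smooth_vec_partial_dir)

lemma smooth_vec_smooth_fun: "smooth_vec f \<Longrightarrow> smooth_fun f"
  unfolding smooth_fun_def
proof (intro allI conjI)
  fix "is" i x
  assume f: "smooth_vec f"
  show "continuous_on UNIV (iter_partial is f)" by (rule smooth_vec_continuous_on[OF smooth_vec_iter_partial[OF f]])
  have "((\<lambda>t. iter_partial is f (x + t *\<^sub>R axis i 1)) has_real_derivative partial_dir i (iter_partial is f) x) (at 0)"
    using smooth_vec_partial_dir[OF smooth_vec_iter_partial[OF f]] by blast
  then show "(\<lambda>t. iter_partial is f (x + t *\<^sub>R axis i 1)) differentiable at 0"
    by (meson field_differentiable_def field_differentiable_imp_differentiable)
qed

text \<open>
  The recursion mirrors the product and chain rule: cutoff_coeff is j is the coefficient of s^j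
  times the j-th derivative of step_pow N in iter_partial_radial_cutoff.
\<close>

fun cutoff_coeff :: "'n::finite list \<Rightarrow> nat \<Rightarrow> real^'n \<Rightarrow> real" where
  "cutoff_coeff [] j = (\<lambda>y. if j = 0 then 1 else 0)"
| "cutoff_coeff (i # is) j = (\<lambda>y. partial_dir i (cutoff_coeff is j) y + (if j = 0 then 0 else 2 * y $ i * cutoff_coeff is (j - 1) y))"

lemma partial_dir_const: "partial_dir i (\<lambda>_. c) = (\<lambda>_. 0)"
  by (auto simp: partial_dir_def)

lemma smooth_vec_cutoff_coeff: "smooth_vec (cutoff_coeff is j)"
proof (induction "is" arbitrary: j)
  case Nil
  show ?case
  proof (cases "j = 0")
    case True then show ?thesis using smooth_vec.smooth_vec_const[of 1] by simp
  next
    case False then show ?thesis using smooth_vec.smooth_vec_const[of 0] by simp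
  qed
next
  case (Cons i "is")
  have a: "smooth_vec (partial_dir i (cutoff_coeff is j))" using smooth_vec_partial_dir[OF Cons.IH] by blast
  show ?case
  proof (cases "j = 0")
    case True
    then show ?thesis using a by simp
  next
    case False
    have "smooth_vec (\<lambda>y. partial_dir i (cutoff_coeff is j) y + (2 * y $ i) * cutoff_coeff is (j - 1) y)"
      by (rule smooth_vec.smooth_vec_add[OF a smooth_vec.smooth_vec_mult[OF smooth_vec.smooth_vec_mult[OF smooth_vec.smooth_vec_const smooth_vec.smooth_vec_coord] Cons.IH]])
    then show ?thesis using False by (simp add: mult.assoc)
  qed
qed

lemma cutoff_coeff_eq_0_above: "length is < j \<Longrightarrow> cutoff_coeff is j = (\<lambda>_. 0)"
proof (induction "is" arbitrary: j)
  case Nil then show ?case by auto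
next
  case (Cons i "is")
  then have "cutoff_coeff is j = (\<lambda>_. 0)" "cutoff_coeff is (j - 1) = (\<lambda>_. 0)" by auto
  then show ?case using Cons.prems by (auto simp: partial_dir_const)
qed

lemma cutoff_coeff_0: "is \<noteq> [] \<Longrightarrow> cutoff_coeff is 0 = (\<lambda>_. 0)"
proof (induction "is")
  case Nil then show ?case by auto
next
  case (Cons i "is")
  show ?case
  proof (cases "is = []")
    case True then show ?thesis by (simp add: partial_dir_const)
  next
    case False then show ?thesis using Cons.IH by (simp add: partial_dir_const)
  qed
qed

definition radial_arg :: "real \<Rightarrow> real \<Rightarrow> real^'n::finite \<Rightarrow> real" where
  "radial_arg s c x = s * ((c *\<^sub>R x) \<bullet> (c *\<^sub>R x)) - s"

definition radial_cutoff :: "nat \<Rightarrow> real \<Rightarrow> real \<Rightarrow> real^'n::finite \<Rightarrow> real" where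
  "radial_cutoff N s c x = step_pow N (radial_arg s c x)"

lemma has_real_derivative_scaled_line:
  assumes "smooth_vec P"
  shows "((\<lambda>t. P (c *\<^sub>R (x + t *\<^sub>R axis i 1))) has_real_derivative c * partial_dir i P (c *\<^sub>R x)) (at 0)"
proof -
  have d1: "((\<lambda>t. P (c *\<^sub>R x + t *\<^sub>R axis i 1)) has_real_derivative partial_dir i P (c *\<^sub>R x)) (at (c * 0))"
    using smooth_vec_partial_dir[OF assms] by simp
  have d2: "((\<lambda>t. c * t) has_real_derivative c) (at 0)"
    by (auto intro!: derivative_eq_intros)
  have "((\<lambda>t. P (c *\<^sub>R x + (c * t) *\<^sub>R axis i 1)) has_real_derivative partial_dir i P (c *\<^sub>R x) * c) (at 0)"
    using DERIV_chain2[OF d1 d2] by simp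
  moreover have "\<And>t. c *\<^sub>R (x + t *\<^sub>R axis i 1) = c *\<^sub>R x + (c * t) *\<^sub>R axis i (1::real)"
    by (simp add: scaleR_add_right)
  ultimately show ?thesis by (simp add: mult.commute)
qed

lemma radial_arg_has_derivative: "((\<lambda>t. radial_arg s c (x + t *\<^sub>R axis i 1)) has_real_derivative s * c\<^sup>2 * (2 * x $ i)) (at 0)"
proof -
  have e: "(\<lambda>t. radial_arg s c (x + t *\<^sub>R axis i 1)) = (\<lambda>t. s * c\<^sup>2 * ((x + t *\<^sub>R axis i 1) \<bullet> (x + t *\<^sub>R axis i 1)) - s)"
    by (auto simp: radial_arg_def power2_eq_square algebra_simps)
  show ?thesis unfolding e
    by (auto intro!: derivative_eq_intros has_real_derivative_inner_self_line)
qed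

lemma step_pow_radial_arg_has_derivative: "((\<lambda>t. (deriv ^^ j) (step_pow N) (radial_arg s c (x + t *\<^sub>R axis i 1))) has_real_derivative
   (deriv ^^ Suc j) (step_pow N) (radial_arg s c x) * (s * c\<^sup>2 * (2 * x $ i))) (at 0)"
  using DERIV_chain2[OF smooth_real_higher_deriv_has_derivative[OF smooth_real_step_pow] radial_arg_has_derivative, of j N s c x i] by simp

lemma cutoff_coeff_Cons_sum:
  assumes "length is = L"
  shows "c ^ Suc L * (\<Sum>j\<le>Suc L. s ^ j * cutoff_coeff (i # is) j (c *\<^sub>R x) * g j)
    = c ^ L * (\<Sum>j\<le>L. s ^ j * (cutoff_coeff is j (c *\<^sub>R x) * (g (Suc j) * (s * c\<^sup>2 * (2 * x $ i)))
        + c * partial_dir i (cutoff_coeff is j) (c *\<^sub>R x) * g j))"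
proof -
  define pd where "pd = (\<lambda>j. partial_dir i (cutoff_coeff is j) (c *\<^sub>R x))"
  have "pd (Suc L) = 0"
    unfolding pd_def using cutoff_coeff_eq_0_above[of "is" "Suc L"] assms by (simp add: partial_dir_const)
  have Pc: "cutoff_coeff (i # is) j (c *\<^sub>R x)
      = pd j + (if j = 0 then 0 else 2 * (c * x $ i) * cutoff_coeff is (j - 1) (c *\<^sub>R x))" for j
    by (simp add: pd_def)
  have "(\<Sum>j\<le>Suc L. s ^ j * cutoff_coeff (i # is) j (c *\<^sub>R x) * g j)
      = (\<Sum>j\<le>Suc L. s ^ j * pd j * g j)
        + (\<Sum>j\<le>Suc L. s ^ j * (if j = 0 then 0 else 2 * (c * x $ i) * cutoff_coeff is (j - 1) (c *\<^sub>R x)) * g j)"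
    unfolding Pc by (simp add: sum.distrib algebra_simps del: cutoff_coeff.simps)
  also have "(\<Sum>j\<le>Suc L. s ^ j * pd j * g j) = (\<Sum>j\<le>L. s ^ j * pd j * g j)"
    using \<open>pd (Suc L) = 0\<close> by simp
  also have "(\<Sum>j\<le>Suc L. s ^ j * (if j = 0 then 0 else 2 * (c * x $ i) * cutoff_coeff is (j - 1) (c *\<^sub>R x)) * g j)
      = (\<Sum>j\<le>L. s ^ Suc j * (2 * (c * x $ i) * cutoff_coeff is j (c *\<^sub>R x)) * g (Suc j))"
    by (subst sum.atMost_Suc_shift) simp
  finally show ?thesis
    by (simp add: pd_def sum_distrib_left sum.distrib power2_eq_square algebra_simps del: cutoff_coeff.simps)
qed

lemma iter_partial_radial_cutoff:
  "iter_partial is (radial_cutoff N s c) x =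
     c ^ length is * (\<Sum>j\<le>length is. s ^ j * cutoff_coeff is j (c *\<^sub>R x) * (deriv ^^ j) (step_pow N) (radial_arg s c x))"
proof (induction "is" arbitrary: x)
  case Nil
  then show ?case by (simp add: radial_cutoff_def)
next
  case (Cons i "is")
  define L where "L = length is"
  define F where "F = (\<lambda>x. c ^ L * (\<Sum>j\<le>L. s ^ j * cutoff_coeff is j (c *\<^sub>R x) * (deriv ^^ j) (step_pow N) (radial_arg s c x)))"
  have IH: "iter_partial is (radial_cutoff N s c) = F" using Cons.IH by (auto simp: F_def L_def)
  define e where "e = axis i (1::real)"
  define pd where "pd = (\<lambda>j. partial_dir i (cutoff_coeff is j) (c *\<^sub>R x))"
  define Gd where "Gd = (\<lambda>j. (deriv ^^ j) (step_pow N) (radial_arg s c x))"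
  define w where "w = s * c\<^sup>2 * (2 * x $ i)"
  have dterm: "((\<lambda>t. s ^ j * cutoff_coeff is j (c *\<^sub>R (x + t *\<^sub>R e)) * (deriv ^^ j) (step_pow N) (radial_arg s c (x + t *\<^sub>R e)))
      has_real_derivative s ^ j * (cutoff_coeff is j (c *\<^sub>R x) * (Gd (Suc j) * w) + c * pd j * Gd j)) (at 0)" for j
  proof -
    have dP: "((\<lambda>t. cutoff_coeff is j (c *\<^sub>R (x + t *\<^sub>R e))) has_real_derivative c * pd j) (at 0)"
      unfolding e_def pd_def by (rule has_real_derivative_scaled_line[OF smooth_vec_cutoff_coeff])
    have dG: "((\<lambda>t. (deriv ^^ j) (step_pow N) (radial_arg s c (x + t *\<^sub>R e))) has_real_derivative Gd (Suc j) * w) (at 0)"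
      unfolding e_def Gd_def w_def by (rule step_pow_radial_arg_has_derivative)
    have "((\<lambda>t. cutoff_coeff is j (c *\<^sub>R (x + t *\<^sub>R e)) * (deriv ^^ j) (step_pow N) (radial_arg s c (x + t *\<^sub>R e)))
      has_real_derivative cutoff_coeff is j (c *\<^sub>R x) * (Gd (Suc j) * w) + c * pd j * Gd j) (at 0)"
      using DERIV_mult'[OF dP dG] by (simp add: Gd_def)
    from DERIV_cmult[OF this, of "s ^ j"] show ?thesis by (simp add: mult.assoc)
  qed
  have dF: "((\<lambda>t. F (x + t *\<^sub>R e)) has_real_derivative
      c ^ L * (\<Sum>j\<le>L. s ^ j * (cutoff_coeff is j (c *\<^sub>R x) * (Gd (Suc j) * w) + c * pd j * Gd j))) (at 0)"
    unfolding F_def by (intro DERIV_cmult DERIV_sum dterm)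
  have "iter_partial (i # is) (radial_cutoff N s c) x = partial_dir i F x" using IH by simp
  also have "\<dots> = c ^ L * (\<Sum>j\<le>L. s ^ j * (cutoff_coeff is j (c *\<^sub>R x) * (Gd (Suc j) * w) + c * pd j * Gd j))"
    unfolding partial_dir_def using dF unfolding e_def by (rule DERIV_imp_deriv)
  also have "\<dots> = c ^ Suc L * (\<Sum>j\<le>Suc L. s ^ j * cutoff_coeff (i # is) j (c *\<^sub>R x) * Gd j)"
    unfolding pd_def w_def by (rule cutoff_coeff_Cons_sum[OF L_def[symmetric], symmetric])
  finally show ?case by (simp add: Gd_def L_def del: cutoff_coeff.simps)
qed

lemma radial_arg_annulus:
  assumes "0 < r1" "r1 < r2"
  shows "radial_arg (r1\<^sup>2 / (r2\<^sup>2 - r1\<^sup>2)) (1 / r1) x = ((norm x)\<^sup>2 - r1\<^sup>2) / (r2\<^sup>2 - r1\<^sup>2)"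
proof -
  have d: "r2\<^sup>2 - r1\<^sup>2 > 0" using assms by (simp add: power_strict_mono)
  have "radial_arg (r1\<^sup>2 / (r2\<^sup>2 - r1\<^sup>2)) (1 / r1) x = r1\<^sup>2 / (r2\<^sup>2 - r1\<^sup>2) * ((norm x)\<^sup>2 / r1\<^sup>2) - r1\<^sup>2 / (r2\<^sup>2 - r1\<^sup>2)"
    using assms(1) by (simp add: radial_arg_def power2_norm_eq_inner power_divide power2_eq_square) (metis dot_square_norm power2_eq_square)
  also have "\<dots> = ((norm x)\<^sup>2 - r1\<^sup>2) / (r2\<^sup>2 - r1\<^sup>2)"
  proof -
    have gen: "a \<noteq> 0 \<Longrightarrow> dd \<noteq> 0 \<Longrightarrow> a / dd * (X / a) - a / dd = (X - a) / dd" for a dd X :: real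
      by (simp add: field_simps)
    show ?thesis by (rule gen) (use d assms(1) in auto)
  qed
  finally show ?thesis .
qed

lemma annulus_ratio:
  fixes r1 r2 t :: real
  assumes "0 < r1" "r1 < r2" "0 \<le> t"
  shows annulus_ratio_neg: "t < r1 \<Longrightarrow> (t\<^sup>2 - r1\<^sup>2) / (r2\<^sup>2 - r1\<^sup>2) < 0"
    and annulus_ratio_ge_1: "r2 \<le> t \<Longrightarrow> 1 \<le> (t\<^sup>2 - r1\<^sup>2) / (r2\<^sup>2 - r1\<^sup>2)"
    and annulus_ratio_gt_1: "r2 < t \<Longrightarrow> 1 < (t\<^sup>2 - r1\<^sup>2) / (r2\<^sup>2 - r1\<^sup>2)"
proof -
  have d: "r2\<^sup>2 - r1\<^sup>2 > 0" using assms by (simp add: power_strict_mono)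
  show "t < r1 \<Longrightarrow> (t\<^sup>2 - r1\<^sup>2) / (r2\<^sup>2 - r1\<^sup>2) < 0"
    using d assms by (simp add: divide_neg_pos power_strict_mono)
  show "r2 \<le> t \<Longrightarrow> 1 \<le> (t\<^sup>2 - r1\<^sup>2) / (r2\<^sup>2 - r1\<^sup>2)"
    using d assms by (simp add: power_mono)
  show "r2 < t \<Longrightarrow> 1 < (t\<^sup>2 - r1\<^sup>2) / (r2\<^sup>2 - r1\<^sup>2)"
    using d assms by (simp add: power_strict_mono)
qed

definition annulus_cutoff :: "nat \<Rightarrow> real \<Rightarrow> real \<Rightarrow> real^'n::finite \<Rightarrow> real" where
  "annulus_cutoff N r1 r2 = radial_cutoff N (r1\<^sup>2 / (r2\<^sup>2 - r1\<^sup>2)) (1 / r1)"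

lemma annulus_cutoff_eq:
  "0 < r1 \<Longrightarrow> r1 < r2 \<Longrightarrow>
     annulus_cutoff N r1 r2 x = step_pow N (((norm x)\<^sup>2 - r1\<^sup>2) / (r2\<^sup>2 - r1\<^sup>2))"
  by (simp add: annulus_cutoff_def radial_cutoff_def radial_arg_annulus)

lemma annulus_cutoff_inside: "0 < r1 \<Longrightarrow> r1 < r2 \<Longrightarrow> norm x < r1 \<Longrightarrow> annulus_cutoff N r1 r2 x = 1"
  using annulus_ratio_neg[of r1 r2 "norm x"] by (simp add: annulus_cutoff_eq step_pow_left)

lemma annulus_cutoff_outside:
  "0 < r1 \<Longrightarrow> r1 < r2 \<Longrightarrow> r2 \<le> norm x \<Longrightarrow> N > 0 \<Longrightarrow> annulus_cutoff N r1 r2 x = 0"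
  using annulus_ratio_ge_1[of r1 r2 "norm x"] by (simp add: annulus_cutoff_eq step_pow_right)

lemma smooth_vec_radial_cutoff: "smooth_vec (radial_cutoff N s c :: real^'n::finite \<Rightarrow> real)"
proof -
  have "smooth_real (\<lambda>w. step_pow N ((s * c\<^sup>2) * w + (- s)))"
    by (rule smooth_real_affine[OF smooth_real_step_pow])
  then have "smooth_vec (\<lambda>x::real^'n. step_pow N ((s * c\<^sup>2) * (x \<bullet> x) + (- s)))"
    by (rule smooth_vec_comp[OF _ smooth_vec_inner_self])
  moreover have "radial_cutoff N s c = (\<lambda>x::real^'n. step_pow N ((s * c\<^sup>2) * (x \<bullet> x) + (- s)))"
    by (auto simp: radial_cutoff_def radial_arg_def power2_eq_square algebra_simps)
  ultimately show ?thesis by simp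
qed

lemma test_fun_annulus_cutoff:
  assumes "0 < r1" "r1 < r2" "N > 0"
  shows "test_fun (annulus_cutoff N r1 r2 :: real^'n::finite \<Rightarrow> real)"
proof -
  let ?S = "{x::real^'n. annulus_cutoff N r1 r2 x \<noteq> 0}"
  have "?S \<subseteq> cball 0 r2"
  proof
    fix x assume "x \<in> ?S"
    then have "\<not> r2 \<le> norm x" using annulus_cutoff_outside[OF assms(1,2) _ assms(3)] by auto
    then show "x \<in> cball 0 r2" by simp
  qed
  then have "closure ?S \<subseteq> cball 0 r2"
    by (rule closure_minimal) simp
  then have "compact (closure ?S)"
    using bounded_subset[OF bounded_cball] by (simp add: compact_eq_bounded_closed)
  then show ?thesis
    using smooth_vec_smooth_fun[OF smooth_vec_radial_cutoff]
    by (simp add: test_fun_def annulus_cutoff_def)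
qed

lemma annulus_scale_bounds:
  assumes "0 < r1" "r1 < r2" "r2 \<le> sqrt \<sigma> * r1" "\<sigma> > 1"
  shows "r1\<^sup>2 / (r2\<^sup>2 - r1\<^sup>2) \<ge> 1 / (\<sigma> - 1)"
    and "(1 / r1) * (r1\<^sup>2 / (r2\<^sup>2 - r1\<^sup>2)) \<le> 1 / (r2 - r1)"
proof -
  have d: "r2\<^sup>2 - r1\<^sup>2 > 0" using assms by (simp add: power_strict_mono)
  have "r2\<^sup>2 \<le> (sqrt \<sigma> * r1)\<^sup>2" using assms by (intro power_mono) auto
  also have "\<dots> = \<sigma> * r1\<^sup>2" using assms by (simp add: power_mult_distrib)
  finally have "r2\<^sup>2 - r1\<^sup>2 \<le> (\<sigma> - 1) * r1\<^sup>2" by (simp add: algebra_simps)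
  then show "r1\<^sup>2 / (r2\<^sup>2 - r1\<^sup>2) \<ge> 1 / (\<sigma> - 1)"
    using d assms by (simp add: field_simps)
  have "r2\<^sup>2 - r1\<^sup>2 = (r2 - r1) * (r2 + r1)" by (simp add: power2_eq_square algebra_simps)
  then have "(1 / r1) * (r1\<^sup>2 / (r2\<^sup>2 - r1\<^sup>2)) = (1 / (r2 - r1)) * (r1 / (r2 + r1))"
    using assms by (simp add: power2_eq_square field_simps)
  also have "\<dots> \<le> 1 / (r2 - r1)"
    using assms by (intro mult_left_le) auto
  finally show "(1 / r1) * (r1\<^sup>2 / (r2\<^sup>2 - r1\<^sup>2)) \<le> 1 / (r2 - r1)" .
qed

lemma power_le_power_mult_max:
  fixes s d :: real
  assumes "0 < d" "d \<le> s" "j \<le> m"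
  shows "s ^ j \<le> s ^ m * max 1 (1 / d) ^ m"
proof -
  have "s ^ j * d ^ (m - j) \<le> s ^ j * s ^ (m - j)"
    using assms by (intro mult_left_mono power_mono) auto
  also have "\<dots> = s ^ m" using assms by (simp flip: power_add)
  finally have "s ^ j \<le> s ^ m * (1 / d) ^ (m - j)"
    using assms by (simp add: power_divide field_simps)
  also have "(1 / d) ^ (m - j) \<le> max 1 (1 / d) ^ (m - j)"
    using assms by (intro power_mono) auto
  also have "\<dots> \<le> max 1 (1 / d) ^ m"
    by (rule power_increasing) auto
  finally show ?thesis
    using assms by (simp add: mult_left_mono)
qed

lemma step_pow_higher_derivs_le_uniform:
  assumes "m \<le> N" "real N - real m \<ge> real N / lam" "lam > 1" "N > 0"
  obtains L where "L \<ge> 0" "\<And>j z. j \<le> m \<Longrightarrow> \<bar>(deriv ^^ j) (step_pow N) z\<bar> \<le> L * step_pow N z powr (1/lam)"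
proof -
  obtain L where L: "\<And>j z. j \<le> m \<Longrightarrow> \<bar>(deriv ^^ j) (step_pow N) z\<bar> \<le> L j * step_pow N z powr (1/lam)"
    using step_pow_higher_deriv_le_powr[OF _ assms] by metis
  have "\<bar>(deriv ^^ j) (step_pow N) z\<bar> \<le> (\<Sum>k\<le>m. \<bar>L k\<bar>) * step_pow N z powr (1/lam)" if "j \<le> m" for j z
  proof -
    have "\<bar>L j\<bar> \<le> (\<Sum>k\<le>m. \<bar>L k\<bar>)" by (rule member_le_sum) (use that in auto)
    then show ?thesis
      using L[OF that, of z] by (smt (verit) abs_ge_self mult_right_mono powr_ge_zero)
  qed
  then show ?thesis by (intro that[of "\<Sum>k\<le>m. \<bar>L k\<bar>"]) (auto intro: sum_nonneg)
qed

lemma cutoff_coeffs_bounded: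
  obtains M where "M \<ge> 0"
    "\<And>(is::'n::finite list) j y. length is = m \<Longrightarrow> j \<le> m \<Longrightarrow> norm y \<le> R \<Longrightarrow> \<bar>cutoff_coeff is j y\<bar> \<le> M"
proof -
  have "\<exists>B. \<forall>y\<in>cball 0 R. \<bar>cutoff_coeff is j y\<bar> \<le> B" for "is" :: "'n list" and j
  proof -
    have "compact (cutoff_coeff is j ` cball 0 R)"
      by (rule compact_continuous_image[OF continuous_on_subset[OF smooth_vec_continuous_on[OF smooth_vec_cutoff_coeff]]]) auto
    then show ?thesis using compact_imp_bounded bounded_real by (metis image_eqI)
  qed
  then obtain B where B: "\<And>(is::'n list) j y. norm y \<le> R \<Longrightarrow> \<bar>cutoff_coeff is j y\<bar> \<le> B is j"
    by (metis mem_cball_0)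
  define Lm where "Lm = {is::'n list. set is \<subseteq> UNIV \<and> length is = m}"
  have finLm: "finite Lm" unfolding Lm_def by (rule finite_lists_length_eq) simp
  define M where "M = (\<Sum>is\<in>Lm. \<Sum>j\<le>m. \<bar>B is j\<bar>)"
  have "\<bar>B is j\<bar> \<le> M" if "length is = m" "j \<le> m" for "is" j
  proof -
    have "\<bar>B is j\<bar> \<le> (\<Sum>j\<le>m. \<bar>B is j\<bar>)" by (rule member_le_sum) (use that in auto)
    also have "\<dots> \<le> M" unfolding M_def
      by (rule member_le_sum[of "is" Lm "\<lambda>is. \<Sum>j\<le>m. \<bar>B is j\<bar>"])
         (use that finLm in \<open>auto simp: Lm_def intro: sum_nonneg\<close>)
    finally show ?thesis .
  qed
  moreover have "M \<ge> 0" unfolding M_def by (intro sum_nonneg) auto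
  ultimately show ?thesis
  proof (intro that[of M])
    fix "is" :: "'n list" and j y
    assume "length is = m" "j \<le> m" "norm (y::real^'n) \<le> R"
    then show "\<bar>cutoff_coeff is j y\<bar> \<le> M"
      using B[of y "is" j] \<open>\<And>is j. length is = m \<Longrightarrow> j \<le> m \<Longrightarrow> \<bar>B is j\<bar> \<le> M\<close>[of "is" j] by linarith
  qed
qed
lemma annulus_cutoff_summand_le:
  fixes x :: "real^'n::finite" and lam \<sigma> r1 r2 M L :: real
  defines "s \<equiv> r1\<^sup>2 / (r2\<^sup>2 - r1\<^sup>2)"
  assumes r: "0 < r1" "r1 < r2" "r2 \<le> sqrt \<sigma> * r1" and sig: "\<sigma> > 1" and N0: "N > 0" and j: "j \<le> m"
    and M: "M \<ge> 0" "norm ((1 / r1) *\<^sub>R x) \<le> sqrt \<sigma> \<Longrightarrow> \<bar>cutoff_coeff is j ((1 / r1) *\<^sub>R x)\<bar> \<le> M"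
    and L: "L \<ge> 0" "\<And>z. \<bar>(deriv ^^ j) (step_pow N) z\<bar> \<le> L * step_pow N z powr (1/lam)"
  shows "\<bar>s ^ j * cutoff_coeff is j ((1 / r1) *\<^sub>R x) * (deriv ^^ j) (step_pow N) (radial_arg s (1 / r1) x)\<bar>
    \<le> s ^ m * max 1 (\<sigma> - 1) ^ m * M * L * step_pow N (radial_arg s (1 / r1) x) powr (1/lam)"
proof -
  define z where "z = radial_arg s (1 / r1) x"
  have s1: "s \<ge> 1 / (\<sigma> - 1)" using annulus_scale_bounds(1)[OF r sig] unfolding s_def .
  have s0: "s > 0" using s1 sig by (smt (verit) divide_pos_pos)
  have sj: "s ^ j \<le> s ^ m * max 1 (\<sigma> - 1) ^ m"
    using power_le_power_mult_max[of "1 / (\<sigma> - 1)" s j m] sig s1 j by simp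
  have "\<bar>cutoff_coeff is j ((1 / r1) *\<^sub>R x)\<bar> * \<bar>(deriv ^^ j) (step_pow N) z\<bar> \<le> M * (L * step_pow N z powr (1/lam))"
  proof (cases "norm ((1 / r1) *\<^sub>R x) \<le> sqrt \<sigma>")
    case True
    then show ?thesis using M L(2)[of z] by (intro mult_mono) auto
  next
    case False
    then have "r2 < norm x" using r by (simp add: field_simps)
    then have "1 < ((norm x)\<^sup>2 - r1\<^sup>2) / (r2\<^sup>2 - r1\<^sup>2)"
      by (rule annulus_ratio_gt_1[OF r(1,2) norm_ge_zero])
    also have "\<dots> = z"
      unfolding z_def s_def by (rule radial_arg_annulus[OF r(1,2), symmetric])
    finally show ?thesis using step_pow_higher_deriv_right N0 M L by simp
  qed
  then have "\<bar>s ^ j * cutoff_coeff is j ((1 / r1) *\<^sub>R x) * (deriv ^^ j) (step_pow N) z\<bar>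
      \<le> s ^ j * (M * (L * step_pow N z powr (1/lam)))"
    using s0 by (simp add: abs_mult mult.assoc mult_left_mono)
  also have "\<dots> \<le> (s ^ m * max 1 (\<sigma> - 1) ^ m) * (M * (L * step_pow N z powr (1/lam)))"
    using sj M L by (intro mult_right_mono) auto
  finally show ?thesis unfolding z_def by (simp add: mult.assoc)
qed

lemma iter_partial_annulus_cutoff_le:
  fixes m N :: nat and lam \<sigma> :: real
  assumes lam: "lam > 1" and sig: "\<sigma> > 1" and Nm: "m \<le> N"
    and Nlam: "real N - real m \<ge> real N / lam" and N0: "N > 0"
  obtains K where "K > 0"
    "\<And>(is::'n::finite list) r1 r2 x. length is = m \<Longrightarrow> 0 < r1 \<Longrightarrow> r1 < r2 \<Longrightarrow> r2 \<le> sqrt \<sigma> * r1 \<Longrightarrow>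
       \<bar>iter_partial is (annulus_cutoff N r1 r2) x\<bar>
         \<le> K / (r2 - r1) ^ m * annulus_cutoff N r1 r2 x powr (1 / lam)"
proof -
  obtain L where L: "L \<ge> 0" "\<And>j z. j \<le> m \<Longrightarrow> \<bar>(deriv ^^ j) (step_pow N) z\<bar> \<le> L * step_pow N z powr (1/lam)"
    using step_pow_higher_derivs_le_uniform[OF Nm Nlam lam N0] by blast
  obtain M where M: "M \<ge> 0"
    "\<And>(is::'n list) j y. length is = m \<Longrightarrow> j \<le> m \<Longrightarrow> norm y \<le> sqrt \<sigma> \<Longrightarrow> \<bar>cutoff_coeff is j y\<bar> \<le> M"
    using cutoff_coeffs_bounded by blast
  define S where "S = max 1 (\<sigma> - 1) ^ m"
  define K where "K = real (Suc m) * S * M * L + 1"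
  have "K > 0" unfolding K_def S_def using M L by (simp add: add_nonneg_pos)
  moreover have "\<bar>iter_partial is (annulus_cutoff N r1 r2) x\<bar>
      \<le> K / (r2 - r1) ^ m * annulus_cutoff N r1 r2 x powr (1 / lam)"
    if len: "length is = m" and r: "0 < r1" "r1 < r2" "r2 \<le> sqrt \<sigma> * r1" for "is" :: "'n list" and r1 r2 x
  proof -
    define s where "s = r1\<^sup>2 / (r2\<^sup>2 - r1\<^sup>2)"
    define c where "c = 1 / r1"
    define z where "z = radial_arg s c x"
    have cs: "c * s \<le> 1 / (r2 - r1)" using annulus_scale_bounds(2)[OF r sig] unfolding s_def c_def .
    have s0: "s > 0" and c0: "c > 0" unfolding s_def c_def using r by (simp_all add: power_strict_mono)
    have "\<bar>iter_partial is (annulus_cutoff N r1 r2) x\<bar>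
        = c ^ m * \<bar>\<Sum>j\<le>m. s ^ j * cutoff_coeff is j (c *\<^sub>R x) * (deriv ^^ j) (step_pow N) z\<bar>"
      using iter_partial_radial_cutoff[of "is" N s c x] len c0
      by (simp add: annulus_cutoff_def s_def c_def z_def abs_mult)
    also have "\<dots> \<le> c ^ m * (\<Sum>j\<le>m. s ^ m * S * M * L * step_pow N z powr (1/lam))"
      using c0 unfolding s_def c_def z_def S_def
      by (intro mult_left_mono order.trans[OF sum_abs sum_mono] annulus_cutoff_summand_le[OF r sig N0]
          M L len) auto
    also have "\<dots> = (c * s) ^ m * (real (Suc m) * S * M * L) * step_pow N z powr (1/lam)"
      by (simp add: power_mult_distrib)
    also have "\<dots> \<le> (1 / (r2 - r1)) ^ m * K * step_pow N z powr (1/lam)"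
      using c0 s0 cs M L r unfolding K_def S_def
      by (intro mult_right_mono mult_mono power_mono) auto
    finally show ?thesis
      by (simp add: annulus_cutoff_def radial_cutoff_def s_def c_def z_def power_divide)
  qed
  ultimately show ?thesis using that by blast
qed

lemma iter_partial_annulus_cutoff_inside:
  fixes x :: "real^'n::finite"
  assumes "is \<noteq> []" "N > 0" "0 < r1" "r1 < r2" "norm x < r1"
  shows "iter_partial is (annulus_cutoff N r1 r2) x = 0"
proof -
  define s where "s = r1\<^sup>2 / (r2\<^sup>2 - r1\<^sup>2)"
  define c where "c = 1 / r1"
  have "radial_arg s c x = ((norm x)\<^sup>2 - r1\<^sup>2) / (r2\<^sup>2 - r1\<^sup>2)"
    unfolding s_def c_def by (rule radial_arg_annulus[OF assms(3,4)])
  also have "\<dots> < 0" by (rule annulus_ratio_neg[OF assms(3,4) norm_ge_zero assms(5)])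
  finally have "radial_arg s c x < 0" .
  then have zero_terms: "s ^ j * cutoff_coeff is j (c *\<^sub>R x) * (deriv ^^ j) (step_pow N) (radial_arg s c x) = 0" for j
    using assms(1,2) step_pow_higher_deriv_outside[of j N "radial_arg s c x"] cutoff_coeff_0[of "is"]
    by (cases "j = 0") auto
  have "annulus_cutoff N r1 r2 = (radial_cutoff N s c :: real^'n \<Rightarrow> real)"
    by (simp add: annulus_cutoff_def s_def c_def)
  then show ?thesis
    by (simp add: iter_partial_radial_cutoff zero_terms)
qed

lemma count_list_exists: "\<exists>xs::'n::finite list. \<forall>i. count_list xs i = \<alpha> i"
proof -
  obtain ys :: "'n list" where ys: "set ys = UNIV" "distinct ys"
    using finite_distinct_list[of "UNIV :: 'n set"] by auto
  define xs where "xs = concat (map (\<lambda>i. replicate (\<alpha> i) i) ys)"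
  have replicate: "count_list (replicate n i) k = (if i = k then n else 0)" for n i k
    by (induction n) auto
  have "count_list xs k = \<alpha> k" for k
  proof -
    have "count_list xs k = sum_list (map (\<lambda>i. count_list (replicate (\<alpha> i) i) k) ys)"
      unfolding xs_def count_list_concat by (simp add: comp_def)
    also have "\<dots> = (\<Sum>i\<in>UNIV. count_list (replicate (\<alpha> i) i) k)"
      using sum_list_distinct_conv_sum_set[OF ys(2)] ys(1) by simp
    also have "\<dots> = \<alpha> k" by (simp add: replicate)
    finally show ?thesis .
  qed
  then show ?thesis by blast
qed

lemma mpartial_eq_iter_partial:
  "\<exists>is. length is = mi_order \<alpha> \<and> (\<forall>f. mpartial (\<alpha>::'n::finite \<Rightarrow> nat) f = iter_partial is f)"
proof -
  let ?xs = "SOME is. \<forall>i. count_list is i = \<alpha> i"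
  have "\<forall>i. count_list ?xs i = \<alpha> i" by (rule someI_ex[OF count_list_exists])
  moreover have "length ?xs = sum (count_list ?xs) UNIV" by (rule sum_count_set[symmetric]) auto
  ultimately show ?thesis by (auto simp: mi_order_def mpartial_def)
qed

lemma exists_large_exponent:
  assumes "lam > 1"
  shows "\<exists>N::nat. m \<le> N \<and> real N / lam \<le> real N - real m"
proof (intro exI conjI)
  define N where "N = nat \<lceil>real m * lam / (lam - 1)\<rceil>"
  have NR: "real m * lam / (lam - 1) \<le> real N" unfolding N_def by linarith
  moreover have "real m \<le> real m * lam / (lam - 1)" using assms by (simp add: field_simps)
  ultimately show "m \<le> N" by linarith
  show "real N / lam \<le> real N - real m" using NR assms by (simp add: field_simps)
qed

definition admissible_cutoff :: "nat \<Rightarrow> real \<Rightarrow> real \<Rightarrow> real \<Rightarrow> real \<Rightarrow> (real^'n::finite \<Rightarrow> real) \<Rightarrow> bool" where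
  "admissible_cutoff m lam K r1 r2 \<phi> \<longleftrightarrow>
     test_fun \<phi> \<and> (\<forall>x. 0 \<le> \<phi> x \<and> \<phi> x \<le> 1) \<and>
     (\<forall>x. norm x < r1 \<longrightarrow> \<phi> x = 1) \<and> (\<forall>x. r2 \<le> norm x \<longrightarrow> \<phi> x = 0) \<and>
     (\<forall>\<alpha> x. mi_order \<alpha> = m \<longrightarrow>
        \<bar>mpartial \<alpha> \<phi> x\<bar> \<le> K * \<phi> x powr (1 / lam) * indicator (ball 0 r2 - ball 0 r1) x)"

lemma admissible_cutoff_exists:
  fixes m :: nat and lam \<sigma> :: real
  assumes m1: "m \<ge> 1" and lam: "lam > 1" and sig: "\<sigma> > 1"
  obtains K where "K > 0"
    "\<And>r1 r2. 0 < r1 \<Longrightarrow> r1 < r2 \<Longrightarrow> r2 \<le> sqrt \<sigma> * r1 \<Longrightarrow>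
       \<exists>\<phi>::real^'n::finite \<Rightarrow> real. admissible_cutoff m lam (K / (r2 - r1) ^ m) r1 r2 \<phi>"
proof -
  obtain N where Nm: "m \<le> N" and Nlam: "real N - real m \<ge> real N / lam"
    using exists_large_exponent[OF lam] by blast
  have N0: "N > 0" using Nm m1 by simp
  obtain K where K: "K > 0"
    and Kb: "\<And>(is::'n list) r1 r2 x. length is = m \<Longrightarrow> 0 < r1 \<Longrightarrow> r1 < r2 \<Longrightarrow> r2 \<le> sqrt \<sigma> * r1 \<Longrightarrow>
       \<bar>iter_partial is (annulus_cutoff N r1 r2) x\<bar> \<le> K / (r2 - r1) ^ m * annulus_cutoff N r1 r2 x powr (1 / lam)"
    using iter_partial_annulus_cutoff_le[OF lam sig Nm Nlam N0] by blast
  have "admissible_cutoff m lam (K / (r2 - r1) ^ m) r1 r2 (annulus_cutoff N r1 r2 :: real^'n \<Rightarrow> real)"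
    if r: "0 < r1" "r1 < r2" "r2 \<le> sqrt \<sigma> * r1" for r1 r2
    unfolding admissible_cutoff_def
  proof (intro conjI allI impI)
    let ?\<phi> = "annulus_cutoff N r1 r2 :: real^'n \<Rightarrow> real"
    show "test_fun ?\<phi>" by (rule test_fun_annulus_cutoff[OF r(1,2) N0])
    show "0 \<le> ?\<phi> x" "?\<phi> x \<le> 1" for x
      using r by (simp_all add: annulus_cutoff_eq step_pow_nonneg step_pow_le_1)
    show "?\<phi> x = 1" if "norm x < r1" for x by (rule annulus_cutoff_inside[OF r(1,2) that])
    show "?\<phi> x = 0" if "r2 \<le> norm x" for x by (rule annulus_cutoff_outside[OF r(1,2) that N0])
    fix \<alpha> :: "'n \<Rightarrow> nat" and x
    assume "mi_order \<alpha> = m"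
    then obtain "is" where len: "length is = m" and mp: "mpartial \<alpha> ?\<phi> x = iter_partial is ?\<phi> x"
      using mpartial_eq_iter_partial[of \<alpha>] by metis
    have bound: "\<bar>mpartial \<alpha> ?\<phi> x\<bar> \<le> K / (r2 - r1) ^ m * ?\<phi> x powr (1 / lam)"
      unfolding mp by (rule Kb[OF len r])
    consider "norm x < r1" | "r2 \<le> norm x" | "x \<in> ball 0 r2 - ball 0 r1" by force
    then show "\<bar>mpartial \<alpha> ?\<phi> x\<bar> \<le> K / (r2 - r1) ^ m * ?\<phi> x powr (1 / lam) * indicator (ball 0 r2 - ball 0 r1) x"
    proof cases
      case 1
      moreover have "is \<noteq> []" using len m1 by auto
      ultimately show ?thesis
        using iter_partial_annulus_cutoff_inside[OF _ N0 r(1,2)] mp by simp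
    next
      case 2
      then show ?thesis using bound annulus_cutoff_outside[OF r(1,2) 2 N0] by simp
    qed (use bound in simp)
  qed
  then show ?thesis using that K by blast
qed
section \<open>Two elementary inequalities\<close>

lemma eps_bound_nondegenerate:
  fixes lam J D T Nc :: real
  assumes lam: "lam > 1" and J: "J > 0" and D: "D \<ge> 0" and T: "T \<ge> 0" and Nc: "Nc \<ge> 0"
    and H: "\<And>e. e > 0 \<Longrightarrow> J \<le> Nc * (e / lam * D + (lam - 1) / lam * e powr (-1/(lam-1)) * T)"
  shows "D > 0" and "T > 0"
proof -
  have Nc0: "Nc > 0"
    using H[of 1] J Nc by (cases "Nc = 0") auto
  show D0: "D > 0"
  proof (rule ccontr)
    assume "\<not> D > 0"
    then have D0: "D = 0" using D by simp
    then have Tp: "T > 0" using H[of 1] J T by (cases "T = 0") auto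
    \<comment> \<open>With D = 0, a large e makes the right-hand side smaller than J.\<close>
    define e where "e = (J / (2 * Nc * T)) powr (-(lam - 1))"
    have e0: "e > 0" unfolding e_def using J Nc0 Tp by simp
    have "e powr (-1/(lam-1)) = (J / (2 * Nc * T)) powr ((-(lam - 1)) * (-1/(lam-1)))"
      unfolding e_def by (simp add: powr_powr)
    also have "(-(lam - 1)) * (-1/(lam-1)) = 1" using lam by (simp add: field_simps)
    finally have ee: "e powr (-1/(lam-1)) = J / (2 * Nc * T)" using J Nc0 Tp by simp
    have "J \<le> Nc * (e / lam * D + (lam - 1) / lam * e powr (-1/(lam-1)) * T)" by (rule H[OF e0])
    also have "\<dots> = (lam - 1) / lam * J / 2" unfolding ee D0 using Nc0 Tp by simp
    also have "\<dots> < J" using lam J by (simp add: field_simps) (smt (verit) mult_pos_pos)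
    finally show False by simp
  qed
  show "T > 0"
  proof (rule ccontr)
    assume "\<not> T > 0"
    then have T0: "T = 0" using T by simp
    define e where "e = lam * J / (2 * Nc * D)"
    have e0: "e > 0" unfolding e_def using J Nc0 D0 lam by simp
    have "J \<le> Nc * (e / lam * D)" using H[OF e0] T0 by simp
    also have "\<dots> = J / 2" unfolding e_def using Nc0 D0 lam by (simp add: field_simps)
    finally show False using J by simp
  qed
qed

lemma eps_bound_optimize:
  fixes lam J D T Nc :: real
  assumes lam: "lam > 1" and J: "J \<ge> 0" and D0: "D > 0" and T0: "T > 0" and Nc: "Nc \<ge> 0"
    and H: "\<And>e. e > 0 \<Longrightarrow> J \<le> Nc * (e / lam * D + (lam - 1) / lam * e powr (-1/(lam-1)) * T)"
  shows "J powr lam \<le> Nc powr lam * T powr (lam - 1) * D"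
proof -
  \<comment> \<open>The two terms balance at e = (T/D)^((lam-1)/lam), both becoming T^((lam-1)/lam) D^(1/lam).\<close>
  define k where "k = (lam - 1) / lam"
  define e where "e = (T / D) powr k"
  have e0: "e > 0" unfolding e_def using T0 D0 by simp
  have t1: "e * D = T powr k * D powr (1 / lam)"
  proof -
    have "e * D = T powr k * (D powr 1 / D powr k)" unfolding e_def using T0 D0 by (simp add: powr_divide)
    also have "D powr 1 / D powr k = D powr (1 - k)" by (simp add: powr_diff)
    also have "1 - k = 1 / lam" unfolding k_def using lam by (simp add: field_simps)
    finally show ?thesis .
  qed
  have t2: "e powr (-1/(lam-1)) * T = T powr k * D powr (1 / lam)"
  proof -
    have "e powr (-1/(lam-1)) = (T / D) powr (k * (-1/(lam-1)))" unfolding e_def by (simp add: powr_powr)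
    also have "k * (-1/(lam-1)) = - (1 / lam)" unfolding k_def using lam by (simp add: field_simps)
    finally have a1: "e powr (-1/(lam-1)) = (T / D) powr (- (1 / lam))" .
    have a2: "(T / D) powr (- (1 / lam)) = T powr (- (1 / lam)) * D powr (1 / lam)"
      using T0 D0 by (simp add: powr_minus powr_divide) (simp add: field_simps)
    have a3: "T powr (- (1 / lam)) * T = T powr k"
    proof -
      have "T powr (- (1 / lam)) * T = T powr (- (1 / lam)) * T powr 1" using T0 by simp
      also have "\<dots> = T powr (- (1 / lam) + 1)" by (rule powr_add[symmetric])
      also have "- (1 / lam) + 1 = k" unfolding k_def using lam by (simp add: field_simps)
      finally show ?thesis .
    qed
    have "e powr (-1/(lam-1)) * T = (T powr (- (1 / lam)) * T) * D powr (1 / lam)"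
      unfolding a1 a2 by (simp add: algebra_simps)
    also have "\<dots> = T powr k * D powr (1 / lam)" unfolding a3 ..
    finally show ?thesis .
  qed
  have "J \<le> Nc * (e / lam * D + (lam - 1) / lam * e powr (-1/(lam-1)) * T)" by (rule H[OF e0])
  also have "\<dots> = Nc * (1 / lam * (e * D) + (lam - 1) / lam * (e powr (-1/(lam-1)) * T))" by (simp add: algebra_simps)
  also have "\<dots> = Nc * (T powr k * D powr (1 / lam))"
    unfolding t1 t2 using lam by (simp add: field_simps)
  finally have JJ: "J \<le> Nc * (T powr k * D powr (1 / lam))" .
  have "J powr lam \<le> (Nc * (T powr k * D powr (1 / lam))) powr lam"
    by (rule powr_mono2) (use lam J JJ in auto)
  also have "\<dots> = Nc powr lam * ((T powr k) powr lam * (D powr (1 / lam)) powr lam)"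
    using Nc T0 D0 by (simp add: powr_mult)
  also have "\<dots> = Nc powr lam * T powr (lam - 1) * D"
    unfolding k_def using lam D0 by (simp add: powr_powr)
  finally show ?thesis .
qed


lemma young_with_parameter:
  fixes lam a b U p K e :: real
  assumes lam: "lam > 1" and a: "a > 0" and b: "b > 0" and U: "U \<ge> 0" and p: "p \<ge> 0" and K: "K \<ge> 0" and e: "e > 0"
  shows "a * U * K * p powr (1/lam) \<le> e / lam * (b * U powr lam * p)
     + (lam - 1) / lam * e powr (-1/(lam-1)) * K powr (lam/(lam-1)) * (a powr (lam/(lam-1)) * b powr (-1/(lam-1)))"
proof -
  define q where "q = lam / (lam - 1)"
  have q1: "q > 1" unfolding q_def using lam by (simp add: field_simps)
  have pq: "1/lam + 1/q = 1" unfolding q_def using lam by (simp add: field_simps)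
  define x where "x = e powr (1/lam) * (b powr (1/lam) * U * p powr (1/lam))"
  define y where "y = e powr (-1/lam) * (K * a * b powr (-1/lam))"
  have x0: "x \<ge> 0" and y0: "y \<ge> 0" unfolding x_def y_def using U K a by auto
  have xy: "x * y = a * U * K * p powr (1/lam)"
  proof -
    have "x * y = (e powr (1/lam) * e powr (-1/lam)) * (b powr (1/lam) * b powr (-1/lam)) * (a * U * K * p powr (1/lam))"
      unfolding x_def y_def by (simp add: algebra_simps)
    also have "e powr (1/lam) * e powr (-1/lam) = 1" using e by (simp add: powr_add[symmetric])
    also have "b powr (1/lam) * b powr (-1/lam) = 1" using b by (simp add: powr_add[symmetric])
    finally show ?thesis by simp
  qed
  have xp: "x powr lam = e * (b * U powr lam * p)"
  proof -
    have "x powr lam = (e powr (1/lam)) powr lam * ((b powr (1/lam)) powr lam * U powr lam * (p powr (1/lam)) powr lam)"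
      unfolding x_def using U p by (simp add: powr_mult)
    also have "\<dots> = e * (b * U powr lam * p)"
      using lam e b p by (simp add: powr_powr)
    finally show ?thesis .
  qed
  have yq: "y powr q = e powr (-1/(lam-1)) * K powr q * (a powr q * b powr (-1/(lam-1)))"
  proof -
    have "y powr q = (e powr (-1/lam)) powr q * (K powr q * a powr q * (b powr (-1/lam)) powr q)"
      unfolding y_def using K a by (simp add: powr_mult)
    also have "(e powr (-1/lam)) powr q = e powr (-1/(lam-1))"
      using lam unfolding q_def by (simp add: powr_powr field_simps)
    also have "(b powr (-1/lam)) powr q = b powr (-1/(lam-1))"
      using lam unfolding q_def by (simp add: powr_powr field_simps)
    finally show ?thesis by (simp add: algebra_simps)
  qed
  have "x * y \<le> x powr lam / lam + y powr q / q"
    by (rule Youngs_inequality[OF lam q1 pq x0 y0])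
  also have "\<dots> = e / lam * (b * U powr lam * p)
     + (lam - 1) / lam * e powr (-1/(lam-1)) * K powr (lam/(lam-1)) * (a powr (lam/(lam-1)) * b powr (-1/(lam-1)))"
    unfolding xp yq using lam by (simp add: q_def field_simps)
  finally show ?thesis unfolding xy .
qed

section \<open>Integral estimates for solutions\<close>

lemma finite_multi_indices: "finite {\<alpha>::'n::finite \<Rightarrow> nat. mi_order \<alpha> = m}"
proof (rule finite_subset)
  show "{\<alpha>::'n \<Rightarrow> nat. mi_order \<alpha> = m} \<subseteq> {\<alpha>. \<forall>i. (i \<in> UNIV \<longrightarrow> \<alpha> i \<in> {..m}) \<and> (i \<notin> UNIV \<longrightarrow> \<alpha> i = 0)}"
  proof (intro subsetI CollectI allI conjI impI)
    fix \<alpha> :: "'n \<Rightarrow> nat" and i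
    assume "\<alpha> \<in> {\<alpha>. mi_order \<alpha> = m}"
    moreover have "\<alpha> i \<le> (\<Sum>j\<in>UNIV. \<alpha> j)" by (rule member_le_sum) auto
    ultimately show "\<alpha> i \<in> {..m}" by (simp add: mi_order_def)
  qed simp
  show "finite {\<alpha>::'n \<Rightarrow> nat. \<forall>i. (i \<in> UNIV \<longrightarrow> \<alpha> i \<in> {..m}) \<and> (i \<notin> UNIV \<longrightarrow> \<alpha> i = 0)}"
    by (rule finite_set_of_finite_funs) auto
qed

lemma test_fun_borel_measurable:
  fixes \<phi> :: "real^'n::finite \<Rightarrow> real"
  assumes "test_fun \<phi>"
  shows "\<phi> \<in> borel_measurable lborel"
proof -
  have "continuous_on UNIV (iter_partial [] \<phi>)"
    using assms unfolding test_fun_def smooth_fun_def by blast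
  then show ?thesis by (simp add: borel_measurable_continuous_onI)
qed

lemma loc_integrable_set_integrable:
  fixes f :: "real^'n::finite \<Rightarrow> real"
  assumes "loc_integrable f" "S \<in> sets lborel" "S \<subseteq> cball 0 R"
  shows "set_integrable lborel S f"
proof (rule set_integrable_subset[OF _ assms(2,3)])
  show "set_integrable lborel (cball 0 R) f"
    using assms(1) unfolding loc_integrable_def by simp
qed

lemma set_integral_annulus:
  fixes f :: "real^'n::finite \<Rightarrow> real"
  assumes "loc_integrable f" "r1 \<le> r2"
  shows "(LINT x:ball 0 r2 - ball 0 r1|lborel. f x) = (LINT x:ball 0 r2|lborel. f x) - (LINT x:ball 0 r1|lborel. f x)"
proof -
  have "ball 0 r2 = ball 0 r1 \<union> (ball (0::real^'n) r2 - ball 0 r1)" using assms(2) by auto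
  then have "(LINT x:ball 0 r2|lborel. f x) = (LINT x:ball 0 r1 \<union> (ball 0 r2 - ball 0 r1)|lborel. f x)"
    by simp
  also have "\<dots> = (LINT x:ball 0 r1|lborel. f x) + (LINT x:ball 0 r2 - ball 0 r1|lborel. f x)"
    using assms(2) by (intro set_integral_Un loc_integrable_set_integrable[OF assms(1), where R=r2]) auto
  finally show ?thesis by simp
qed

lemma J_fun_diff_eq_nn_integral:
  fixes b u :: "real^'n::finite \<Rightarrow> real"
  assumes loc: "loc_integrable (\<lambda>x. b x * \<bar>u x\<bar> powr lam)" and b: "\<forall>x. b x > 0" and r: "r1 \<le> r2"
  shows "ennreal (J_fun lam b u r2 - J_fun lam b u r1)
    = (\<integral>\<^sup>+ x \<in> ball 0 r2 - ball 0 r1. ennreal (b x * \<bar>u x\<bar> powr lam) \<partial>lborel)"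
proof -
  let ?A = "ball (0::real^'n) r2 - ball 0 r1"
  have "set_integrable lborel ?A (\<lambda>x. b x * \<bar>u x\<bar> powr lam)"
    by (rule loc_integrable_set_integrable[OF loc, where R=r2]) auto
  then have int: "integrable lborel (\<lambda>x. indicator ?A x * (b x * \<bar>u x\<bar> powr lam))"
    by (simp add: set_integrable_def)
  have "J_fun lam b u r2 - J_fun lam b u r1 = (LINT x:?A|lborel. b x * \<bar>u x\<bar> powr lam)"
    unfolding J_fun_def by (rule set_integral_annulus[OF loc r, symmetric])
  also have "\<dots> = (\<integral>x. indicator ?A x * (b x * \<bar>u x\<bar> powr lam) \<partial>lborel)"
    by (simp add: set_lebesgue_integral_def)
  finally have "ennreal (J_fun lam b u r2 - J_fun lam b u r1)
      = (\<integral>\<^sup>+ x. ennreal (indicator ?A x * (b x * \<bar>u x\<bar> powr lam)) \<partial>lborel)"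
    using b by (simp add: nn_integral_eq_integral[OF int] less_imp_le)
  also have "\<dots> = (\<integral>\<^sup>+ x \<in> ?A. ennreal (b x * \<bar>u x\<bar> powr lam) \<partial>lborel)"
    by (intro nn_integral_cong) (simp add: indicator_def)
  finally show ?thesis .
qed

lemma J_fun_mono:
  fixes b u :: "real^'n::finite \<Rightarrow> real"
  assumes "loc_integrable (\<lambda>x. b x * \<bar>u x\<bar> powr lam)" "\<forall>x. b x > 0" "r1 \<le> r2"
  shows "J_fun lam b u r1 \<le> J_fun lam b u r2"
proof -
  have "(LINT x:ball 0 r2 - ball 0 r1|lborel. b x * \<bar>u x\<bar> powr lam) \<ge> 0"
    unfolding set_lebesgue_integral_def using assms(2)
    by (intro integral_nonneg_AE) (simp add: indicator_def less_imp_le)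
  then show ?thesis
    unfolding J_fun_def set_integral_annulus[OF assms(1,3)] by simp
qed

lemma set_integral_ball_le_integral_cutoff:
  fixes f \<phi> :: "real^'n::finite \<Rightarrow> real"
  assumes f: "loc_integrable f" "\<And>x. f x \<ge> 0"
    and \<phi>: "\<phi> \<in> borel_measurable lborel" "\<And>x. 0 \<le> \<phi> x" "\<And>x. \<phi> x \<le> 1"
      "\<And>x. norm x < r1 \<Longrightarrow> \<phi> x = 1" "\<And>x. r2 \<le> norm x \<Longrightarrow> \<phi> x = 0"
  shows "(LINT x:ball 0 r1|lborel. f x) \<le> (\<integral>x. f x * \<phi> x \<partial>lborel)"
proof -
  have g: "integrable lborel (\<lambda>x. indicator (cball 0 r2) x *\<^sub>R f x)"
    using loc_integrable_set_integrable[OF f(1), of "cball 0 r2" r2] by (simp add: set_integrable_def)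
  have eq: "f x * \<phi> x = (indicator (cball 0 r2) x *\<^sub>R f x) * \<phi> x" for x
    using \<phi>(5)[of x] by (cases "x \<in> cball 0 r2") auto
  have "(\<lambda>x. f x * \<phi> x) \<in> borel_measurable lborel"
    unfolding eq using borel_measurable_integrable[OF g] \<phi>(1) by measurable
  then have "integrable lborel (\<lambda>x. f x * \<phi> x)"
  proof (rule Bochner_Integration.integrable_bound[OF g])
    show "AE x in lborel. norm (f x * \<phi> x) \<le> norm (indicator (cball 0 r2) x *\<^sub>R f x)"
      using f(2) \<phi>(2,3) by (intro AE_I2) (simp add: eq abs_mult mult_left_le)
  qed
  moreover have "integrable lborel (\<lambda>x. indicator (ball 0 r1) x *\<^sub>R f x)"
    using loc_integrable_set_integrable[OF f(1), of "ball 0 r1" r1] by (simp add: set_integrable_def)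
  ultimately show ?thesis
    unfolding set_lebesgue_integral_def
    using f(2) \<phi>(2,4) by (intro integral_mono) (auto simp: indicator_def)
qed
lemma abs_sum_coeff_mpartial_le:
  fixes S :: "('n::finite \<Rightarrow> nat) set" and \<phi> a b u :: "real^'n \<Rightarrow> real"
    and aa :: "('n \<Rightarrow> nat) \<Rightarrow> real^'n \<Rightarrow> real \<Rightarrow> real"
  assumes lam: "lam > 1" and a: "a x > 0" and b: "b x > 0" and e: "e > 0" and K: "K \<ge> 0"
    and \<phi>: "0 \<le> \<phi> x" "\<phi> x \<le> 1"
    and growth: "\<And>\<alpha> \<zeta>. \<alpha> \<in> S \<Longrightarrow> \<bar>aa \<alpha> x \<zeta>\<bar> \<le> a x * \<bar>\<zeta>\<bar>"
    and deriv: "\<And>\<alpha>. \<alpha> \<in> S \<Longrightarrow> \<bar>mpartial \<alpha> \<phi> x\<bar> \<le> K * \<phi> x powr (1 / lam) * indicator A x"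
  shows "\<bar>\<Sum>\<alpha>\<in>S. aa \<alpha> x (u x) * mpartial \<alpha> \<phi> x\<bar>
    \<le> card S * (e / lam) * (b x * \<bar>u x\<bar> powr lam * indicator A x)
      + card S * ((lam - 1) / lam * e powr (-1/(lam-1)) * K powr (lam/(lam-1)))
        * (a x powr (lam/(lam-1)) * b x powr (-1/(lam-1)) * indicator A x)"
proof -
  define Y where "Y = e / lam * (b x * \<bar>u x\<bar> powr lam)
    + (lam - 1) / lam * e powr (-1/(lam-1)) * K powr (lam/(lam-1)) * (a x powr (lam/(lam-1)) * b x powr (-1/(lam-1)))"
  have "a x * \<bar>u x\<bar> * K * \<phi> x powr (1/lam)
      \<le> e / lam * (b x * \<bar>u x\<bar> powr lam * \<phi> x)
        + (lam - 1) / lam * e powr (-1/(lam-1)) * K powr (lam/(lam-1)) * (a x powr (lam/(lam-1)) * b x powr (-1/(lam-1)))"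
    by (rule young_with_parameter[OF lam a b abs_ge_zero \<phi>(1) K e])
  also have "\<dots> \<le> Y"
    unfolding Y_def using lam e b \<phi> by (intro add_right_mono mult_left_mono mult_left_le) auto
  finally have young: "a x * \<bar>u x\<bar> * K * \<phi> x powr (1/lam) \<le> Y" .
  have "\<bar>aa \<alpha> x (u x) * mpartial \<alpha> \<phi> x\<bar> \<le> Y * indicator A x" if "\<alpha> \<in> S" for \<alpha>
  proof -
    have "\<bar>aa \<alpha> x (u x) * mpartial \<alpha> \<phi> x\<bar> \<le> (a x * \<bar>u x\<bar>) * (K * \<phi> x powr (1 / lam) * indicator A x)"
      unfolding abs_mult using growth[OF that] deriv[OF that] a by (intro mult_mono) auto
    also have "\<dots> \<le> Y * indicator A x"
      using young by (simp add: indicator_def mult.assoc)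
    finally show ?thesis .
  qed
  then have "(\<Sum>\<alpha>\<in>S. \<bar>aa \<alpha> x (u x) * mpartial \<alpha> \<phi> x\<bar>) \<le> card S * (Y * indicator A x)"
    using sum_mono[of S "\<lambda>\<alpha>. \<bar>aa \<alpha> x (u x) * mpartial \<alpha> \<phi> x\<bar>" "\<lambda>_. Y * indicator A x"] by simp
  then have "\<bar>\<Sum>\<alpha>\<in>S. aa \<alpha> x (u x) * mpartial \<alpha> \<phi> x\<bar> \<le> card S * (Y * indicator A x)"
    by (rule order.trans[OF sum_abs])
  then show ?thesis
    by (simp add: Y_def algebra_simps)
qed

lemma set_integrable_ennreal_measurable:
  fixes f :: "'a \<Rightarrow> real"
  assumes "set_integrable M A f"
  shows "(\<lambda>x. ennreal (f x) * indicator A x) \<in> borel_measurable M"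
proof -
  have "(\<lambda>x. indicator A x *\<^sub>R f x) \<in> borel_measurable M"
    using assms by (intro borel_measurable_integrable) (simp add: set_integrable_def)
  moreover have "(\<lambda>x. ennreal (f x) * indicator A x) = (\<lambda>x. ennreal (indicator A x *\<^sub>R f x))"
    by (auto simp: indicator_def)
  ultimately show ?thesis by simp
qed

lemma nn_integral_sum_coeff_mpartial_le:
  fixes aa :: "('n::finite \<Rightarrow> nat) \<Rightarrow> real^'n \<Rightarrow> real \<Rightarrow> real" and a b u \<phi> :: "real^'n \<Rightarrow> real"
    and m :: nat and lam K r1 r2 e :: real
  defines "A \<equiv> ball 0 r2 - ball 0 r1" and "Nc \<equiv> real (card {\<alpha>::'n \<Rightarrow> nat. mi_order \<alpha> = m})"
  assumes lam: "lam > 1"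
    and a: "a \<in> borel_measurable lborel" "\<forall>x. a x > 0"
    and b: "b \<in> borel_measurable lborel" "\<forall>x. b x > 0"
    and growth: "\<forall>\<alpha>. mi_order \<alpha> = m \<longrightarrow> (AE x in lborel. \<forall>\<zeta>. \<bar>aa \<alpha> x \<zeta>\<bar> \<le> a x * \<bar>\<zeta>\<bar>)"
    and f_int: "set_integrable lborel A (\<lambda>x. b x * \<bar>u x\<bar> powr lam)"
    and \<phi>: "admissible_cutoff m lam K r1 r2 \<phi>" and K: "K \<ge> 0" and e: "e > 0"
  shows "(\<integral>\<^sup>+ x. ennreal (\<Sum>\<alpha>\<in>{\<alpha>. mi_order \<alpha> = m}. aa \<alpha> x (u x) * mpartial \<alpha> \<phi> x) \<partial>lborel)
    \<le> ennreal (Nc * (e / lam)) * (\<integral>\<^sup>+ x \<in> A. ennreal (b x * \<bar>u x\<bar> powr lam) \<partial>lborel)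
      + ennreal (Nc * ((lam - 1) / lam * e powr (-1/(lam-1)) * K powr (lam/(lam-1))))
        * (\<integral>\<^sup>+ x \<in> A. ennreal (a x powr (lam / (lam - 1)) * b x powr (- 1 / (lam - 1))) \<partial>lborel)"
proof -
  define S where "S = {\<alpha>::'n \<Rightarrow> nat. mi_order \<alpha> = m}"
  define f where "f = (\<lambda>x. b x * \<bar>u x\<bar> powr lam)"
  define w where "w = (\<lambda>x. a x powr (lam / (lam - 1)) * b x powr (- 1 / (lam - 1)))"
  define c1 where "c1 = Nc * (e / lam)"
  define c2 where "c2 = Nc * ((lam - 1) / lam * e powr (-1/(lam-1)) * K powr (lam/(lam-1)))"
  have c0: "c1 \<ge> 0" "c2 \<ge> 0" unfolding c1_def c2_def Nc_def using lam e by auto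
  have \<phi>_range: "\<And>x. 0 \<le> \<phi> x" "\<And>x. \<phi> x \<le> 1"
    and \<phi>_deriv: "\<And>\<alpha> x. \<alpha> \<in> S \<Longrightarrow> \<bar>mpartial \<alpha> \<phi> x\<bar> \<le> K * \<phi> x powr (1 / lam) * indicator A x"
    using \<phi> unfolding admissible_cutoff_def S_def A_def by auto
  have "AE x in lborel. \<forall>\<alpha>\<in>S. \<forall>\<zeta>. \<bar>aa \<alpha> x \<zeta>\<bar> \<le> a x * \<bar>\<zeta>\<bar>"
    using growth by (intro AE_finite_allI) (auto simp: S_def finite_multi_indices)
  then have "AE x in lborel. ennreal (\<Sum>\<alpha>\<in>S. aa \<alpha> x (u x) * mpartial \<alpha> \<phi> x)
      \<le> ennreal c1 * (ennreal (f x) * indicator A x) + ennreal c2 * (ennreal (w x) * indicator A x)"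
  proof eventually_elim
    case (elim x)
    have "\<bar>\<Sum>\<alpha>\<in>S. aa \<alpha> x (u x) * mpartial \<alpha> \<phi> x\<bar>
        \<le> card S * (e / lam) * (b x * \<bar>u x\<bar> powr lam * indicator A x)
          + card S * ((lam - 1) / lam * e powr (-1/(lam-1)) * K powr (lam/(lam-1)))
            * (a x powr (lam/(lam-1)) * b x powr (-1/(lam-1)) * indicator A x)"
      by (rule abs_sum_coeff_mpartial_le[OF lam]) (use elim a(2) b(2) e K \<phi>_range \<phi>_deriv in auto)
    moreover have "Nc = card S" unfolding Nc_def S_def ..
    ultimately have "(\<Sum>\<alpha>\<in>S. aa \<alpha> x (u x) * mpartial \<alpha> \<phi> x) \<le> c1 * (f x * indicator A x) + c2 * (w x * indicator A x)"
      unfolding c1_def c2_def f_def w_def by (smt (verit) abs_ge_self)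
    then have "ennreal (\<Sum>\<alpha>\<in>S. aa \<alpha> x (u x) * mpartial \<alpha> \<phi> x)
        \<le> ennreal (c1 * (f x * indicator A x) + c2 * (w x * indicator A x))"
      by (rule ennreal_leI)
    also have "\<dots> = ennreal c1 * (ennreal (f x) * indicator A x) + ennreal c2 * (ennreal (w x) * indicator A x)"
      using c0 a(2) b(2) unfolding f_def w_def
      by (cases "x \<in> A") (simp_all add: ennreal_plus ennreal_mult less_imp_le)
    finally show ?case .
  qed
  then have "(\<integral>\<^sup>+ x. ennreal (\<Sum>\<alpha>\<in>S. aa \<alpha> x (u x) * mpartial \<alpha> \<phi> x) \<partial>lborel)
      \<le> (\<integral>\<^sup>+ x. ennreal c1 * (ennreal (f x) * indicator A x) + ennreal c2 * (ennreal (w x) * indicator A x) \<partial>lborel)"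
    by (rule nn_integral_mono_AE)
  also have "\<dots> = ennreal c1 * (\<integral>\<^sup>+ x \<in> A. ennreal (f x) \<partial>lborel) + ennreal c2 * (\<integral>\<^sup>+ x \<in> A. ennreal (w x) \<partial>lborel)"
  proof -
    have "(\<lambda>x. ennreal (f x) * indicator A x) \<in> borel_measurable lborel"
      using f_int unfolding f_def by (rule set_integrable_ennreal_measurable)
    moreover have "(\<lambda>x. ennreal (w x) * indicator A x) \<in> borel_measurable lborel"
    proof -
      have [measurable]: "A \<in> sets lborel" unfolding A_def by simp
      show ?thesis unfolding w_def using a(1) b(1) by measurable
    qed
    ultimately show ?thesis
      by (simp add: nn_integral_add nn_integral_cmult)
  qed
  finally show ?thesis unfolding S_def c1_def c2_def f_def w_def .
qed

lemma cutoff_energy_estimate: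
  fixes aa :: "('n::finite \<Rightarrow> nat) \<Rightarrow> real^'n \<Rightarrow> real \<Rightarrow> real" and a b u \<phi> :: "real^'n \<Rightarrow> real"
    and m :: nat and lam K r1 r2 e :: real
  defines "IA \<equiv> \<integral>\<^sup>+ x \<in> ball 0 r2 - ball 0 r1.
      ennreal (a x powr (lam / (lam - 1)) * b x powr (- 1 / (lam - 1))) \<partial>lborel"
    and "Nc \<equiv> real (card {\<alpha>::'n \<Rightarrow> nat. mi_order \<alpha> = m})"
  assumes lam: "lam > 1"
    and a: "a \<in> borel_measurable lborel" "\<forall>x. a x > 0"
    and b: "b \<in> borel_measurable lborel" "\<forall>x. b x > 0"
    and growth: "\<forall>\<alpha>. mi_order \<alpha> = m \<longrightarrow> (AE x in lborel. \<forall>\<zeta>. \<bar>aa \<alpha> x \<zeta>\<bar> \<le> a x * \<bar>\<zeta>\<bar>)"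
    and sol: "is_solution m lam aa b u"
    and \<phi>: "admissible_cutoff m lam K r1 r2 \<phi>" and K: "K \<ge> 0" and r: "r1 \<le> r2"
    and IA_finite: "IA \<noteq> \<infinity>" and e: "e > 0"
  shows "J_fun lam b u r1 \<le> Nc * (e / lam * (J_fun lam b u r2 - J_fun lam b u r1)
      + (lam - 1) / lam * e powr (-1/(lam-1)) * (K powr (lam/(lam-1)) * enn2real IA))"
proof -
  define f where "f = (\<lambda>x. b x * \<bar>u x\<bar> powr lam)"
  define D where "D = J_fun lam b u r2 - J_fun lam b u r1"
  define c1 where "c1 = Nc * (e / lam)"
  define c2 where "c2 = Nc * ((lam - 1) / lam * e powr (-1/(lam-1)) * K powr (lam/(lam-1)))"
  have loc: "loc_integrable f" using sol unfolding is_solution_def f_def by simp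
  have \<phi>_test: "test_fun \<phi>" and \<phi>_range: "\<And>x. 0 \<le> \<phi> x" "\<And>x. \<phi> x \<le> 1"
    and \<phi>_in: "\<And>x. norm x < r1 \<Longrightarrow> \<phi> x = 1" and \<phi>_out: "\<And>x. r2 \<le> norm x \<Longrightarrow> \<phi> x = 0"
    using \<phi> unfolding admissible_cutoff_def by auto
  have D0: "D \<ge> 0" unfolding D_def using J_fun_mono[OF loc[unfolded f_def] b(2) r] by simp
  have c0: "c1 \<ge> 0" "c2 \<ge> 0" unfolding c1_def c2_def Nc_def using lam e by auto
  have "J_fun lam b u r1 \<le> (\<integral>x. f x * \<phi> x \<partial>lborel)"
    unfolding J_fun_def f_def[symmetric]
    using b(2) by (intro set_integral_ball_le_integral_cutoff[OF loc _ test_fun_borel_measurable[OF \<phi>_test]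
        \<phi>_range \<phi>_in \<phi>_out]) (simp add: f_def less_imp_le)
  also have "\<dots> \<le> (\<integral>x. (\<Sum>\<alpha>\<in>{\<alpha>. mi_order \<alpha> = m}. aa \<alpha> x (u x) * mpartial \<alpha> \<phi> x) \<partial>lborel)"
    using sol \<phi>_test \<phi>_range unfolding is_solution_def f_def by blast
  also have "\<dots> \<le> c1 * D + c2 * enn2real IA"
  proof (rule integral_real_bounded)
    show "0 \<le> c1 * D + c2 * enn2real IA" using c0 D0 by simp
    have "ball 0 r2 - ball 0 r1 \<subseteq> cball (0::real^'n) r2" using ball_subset_cball by blast
    then have "set_integrable lborel (ball 0 r2 - ball 0 r1) f"
      by (intro loc_integrable_set_integrable[OF loc]) auto
    then have "(\<integral>\<^sup>+ x. ennreal (\<Sum>\<alpha>\<in>{\<alpha>. mi_order \<alpha> = m}. aa \<alpha> x (u x) * mpartial \<alpha> \<phi> x) \<partial>lborel)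
        \<le> ennreal c1 * (\<integral>\<^sup>+ x \<in> ball 0 r2 - ball 0 r1. ennreal (f x) \<partial>lborel) + ennreal c2 * IA"
      unfolding c1_def c2_def IA_def Nc_def f_def
      by (rule nn_integral_sum_coeff_mpartial_le[OF lam a b growth _ \<phi> K e])
    also have "\<dots> = ennreal (c1 * D + c2 * enn2real IA)"
      using J_fun_diff_eq_nn_integral[OF loc[unfolded f_def] b(2) r] IA_finite c0 D0
      by (simp add: f_def D_def less_top ennreal_plus ennreal_mult)
    finally show "(\<integral>\<^sup>+ x. ennreal (\<Sum>\<alpha>\<in>{\<alpha>. mi_order \<alpha> = m}. aa \<alpha> x (u x) * mpartial \<alpha> \<phi> x) \<partial>lborel)
        \<le> ennreal (c1 * D + c2 * enn2real IA)" .
  qed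
  finally show ?thesis
    unfolding c1_def c2_def D_def by (simp add: algebra_simps)
qed
lemma h_fun_annulus_bound:
  fixes a b :: "real^'n::finite \<Rightarrow> real" and lam \<sigma> r1 r2 r :: real
  defines "IA \<equiv> \<integral>\<^sup>+ x \<in> ball 0 r2 - ball 0 r1.
      ennreal (a x powr (lam / (lam - 1)) * b x powr (- 1 / (lam - 1))) \<partial>lborel"
  assumes lam: "lam > 1" and sig: "\<sigma> > 1"
    and r: "0 < r1" "r1 < r" "r < r2" "r2 \<le> sqrt \<sigma> * r1"
  shows "IA = \<infinity> \<Longrightarrow> h_fun lam \<sigma> a b r = 0"
    and "0 < enn2real IA \<Longrightarrow>
      h_fun lam \<sigma> a b r \<le> enn2real IA powr (1 - lam) * (sqrt \<sigma> * r1) powr (CARD('n) * (lam - 1))"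
proof -
  define Ir where "Ir = (\<integral>\<^sup>+ x \<in> ball 0 (sqrt \<sigma> * r) - ball 0 (r / sqrt \<sigma>).
      ennreal (a x powr (lam / (lam - 1)) * b x powr (- 1 / (lam - 1))) \<partial>lborel)"
  have h: "h_fun lam \<sigma> a b r = (if Ir = \<infinity> then 0 else (enn2real Ir / r ^ CARD('n)) powr (1 - lam))"
    unfolding h_fun_def Ir_def Let_def ..
  have "ball 0 r2 - ball 0 r1 \<subseteq> ball (0::real^'n) (sqrt \<sigma> * r) - ball 0 (r / sqrt \<sigma>)"
  proof
    have sq: "sqrt \<sigma> > 1" using sig by simp
    fix x assume "x \<in> ball (0::real^'n) r2 - ball 0 r1"
    moreover have "r / sqrt \<sigma> < r1" using r sq by (simp add: divide_less_eq mult.commute)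
    moreover have "r2 < sqrt \<sigma> * r" using r sq by (smt (verit) mult_strict_left_mono)
    ultimately show "x \<in> ball 0 (sqrt \<sigma> * r) - ball 0 (r / sqrt \<sigma>)" by auto
  qed
  then have IA_Ir: "IA \<le> Ir"
    unfolding IA_def Ir_def by (intro nn_integral_mono) (auto simp: indicator_def)
  show "IA = \<infinity> \<Longrightarrow> h_fun lam \<sigma> a b r = 0" using IA_Ir h by (simp add: top_unique)
  assume IA0: "0 < enn2real IA"
  show "h_fun lam \<sigma> a b r \<le> enn2real IA powr (1 - lam) * (sqrt \<sigma> * r1) powr (CARD('n) * (lam - 1))"
  proof (cases "Ir = \<infinity>")
    case False
    have rp: "r > 0" using r by simp
    have "enn2real IA \<le> enn2real Ir" using IA_Ir False by (simp add: enn2real_mono less_top)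
    then have "(enn2real Ir / r ^ CARD('n)) powr (1 - lam) \<le> (enn2real IA / r ^ CARD('n)) powr (1 - lam)"
      using lam IA0 rp by (intro powr_mono2') (auto intro: divide_right_mono)
    also have "\<dots> = enn2real IA powr (1 - lam) / r powr (CARD('n) * (1 - lam))"
      using IA0 rp by (simp add: powr_divide powr_realpow[symmetric] powr_powr)
    also have "\<dots> = enn2real IA powr (1 - lam) * r powr (CARD('n) * (lam - 1))"
      by (simp add: divide_inverse powr_minus[symmetric] algebra_simps)
    also have "\<dots> \<le> enn2real IA powr (1 - lam) * (sqrt \<sigma> * r1) powr (CARD('n) * (lam - 1))"
      using r rp lam by (intro mult_left_mono powr_mono2) auto
    finally show ?thesis using False h by simp
  qed (use h in simp)
qed

lemma J_fun_nonneg: "\<forall>x. b x > 0 \<Longrightarrow> 0 \<le> J_fun lam b u r"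
  unfolding J_fun_def set_lebesgue_integral_def
  by (intro integral_nonneg_AE) (simp add: indicator_def less_imp_le)

lemma mult_cSUP_le:
  fixes h :: "'a \<Rightarrow> real"
  assumes "A \<noteq> {}" "0 \<le> Y" "0 \<le> D" "\<And>r. r \<in> A \<Longrightarrow> Y * h r \<le> D"
  shows "Y * (SUP r\<in>A. h r) \<le> D"
proof (cases "Y = 0")
  case False
  then have Y: "Y > 0" using assms(2) by simp
  have "(SUP r\<in>A. h r) \<le> D / Y"
    using assms(1,4) Y by (intro cSUP_least) (auto simp: field_simps mult.commute)
  then show ?thesis using Y by (simp add: field_simps mult.commute)
qed (use assms(3) in simp)
lemma energy_bound_rescale:
  fixes J D I H K Nc \<delta> \<rho> s n lam :: real and m :: nat
  assumes lam: "lam > 1" and pos: "J \<ge> 0" "D \<ge> 0" "I > 0" "K > 0" "Nc \<ge> 0" "\<delta> > 0" "\<rho> > 0" "s > 0"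
    and J: "J powr lam \<le> Nc powr lam * ((K / \<delta> ^ m) powr (lam / (lam - 1)) * I) powr (lam - 1) * D"
    and H: "H \<le> I powr (1 - lam) * (s * \<rho>) powr (n * (lam - 1))"
  shows "\<delta> powr (lam * m) * \<rho> powr ((1 - lam) * n) * H * J powr lam
    \<le> ((Nc + 1) * K) powr lam * s powr (n * (lam - 1)) * D"
proof -
  have K_scaled: "((K / \<delta> ^ m) powr (lam / (lam - 1))) powr (lam - 1) = K powr lam / \<delta> powr (lam * m)"
    using lam pos by (simp add: powr_powr powr_divide powr_realpow[symmetric] mult.commute)
  have I_cancel: "I powr (1 - lam) * I powr (lam - 1) = 1"
    using pos by (simp add: powr_add[symmetric])
  have \<rho>_cancel: "\<rho> powr ((1 - lam) * n) * \<rho> powr (n * (lam - 1)) = 1"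
    using pos by (simp add: powr_add[symmetric] algebra_simps)
  have "\<delta> powr (lam * m) * \<rho> powr ((1 - lam) * n) * H * J powr lam
      \<le> \<delta> powr (lam * m) * \<rho> powr ((1 - lam) * n) * (I powr (1 - lam) * (s * \<rho>) powr (n * (lam - 1)))
        * (Nc powr lam * ((K / \<delta> ^ m) powr (lam / (lam - 1)) * I) powr (lam - 1) * D)"
    using H J by (intro mult_mono mult_left_mono) auto
  also have "\<dots> = (\<delta> powr (lam * m) * (K powr lam / \<delta> powr (lam * m)))
        * (\<rho> powr ((1 - lam) * n) * \<rho> powr (n * (lam - 1))) * (I powr (1 - lam) * I powr (lam - 1))
        * (Nc powr lam * s powr (n * (lam - 1)) * D)"
    using pos by (simp add: powr_mult K_scaled mult_ac)
  also have "\<dots> = (Nc * K) powr lam * s powr (n * (lam - 1)) * D"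
    unfolding I_cancel \<rho>_cancel using pos by (simp add: powr_mult)
  also have "\<dots> \<le> ((Nc + 1) * K) powr lam * s powr (n * (lam - 1)) * D"
    using pos lam by (intro mult_right_mono powr_mono2) auto
  finally show ?thesis .
qed

lemma J_fun_diff_lower_bound:
  fixes aa :: "('n::finite \<Rightarrow> nat) \<Rightarrow> real^'n \<Rightarrow> real \<Rightarrow> real" and a b u \<phi> :: "real^'n \<Rightarrow> real"
    and m :: nat and lam \<sigma> K r1 r2 r :: real
  defines "Nc \<equiv> real (card {\<alpha>::'n \<Rightarrow> nat. mi_order \<alpha> = m})"
  assumes lam: "lam > 1" and sig: "\<sigma> > 1"
    and a: "a \<in> borel_measurable lborel" "\<forall>x. a x > 0"
    and b: "b \<in> borel_measurable lborel" "\<forall>x. b x > 0"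
    and growth: "\<forall>\<alpha>. mi_order \<alpha> = m \<longrightarrow> (AE x in lborel. \<forall>\<zeta>. \<bar>aa \<alpha> x \<zeta>\<bar> \<le> a x * \<bar>\<zeta>\<bar>)"
    and sol: "is_solution m lam aa b u"
    and \<phi>: "admissible_cutoff m lam (K / (r2 - r1) ^ m) r1 r2 \<phi>" and K: "K > 0"
    and r: "0 < r1" "r1 < r" "r < r2" "r2 \<le> sqrt \<sigma> * r1"
  shows "(r2 - r1) powr (lam * m) * r1 powr ((1 - lam) * CARD('n)) * h_fun lam \<sigma> a b r * J_fun lam b u r1 powr lam
    \<le> ((Nc + 1) * K) powr lam * sqrt \<sigma> powr (CARD('n) * (lam - 1)) * (J_fun lam b u r2 - J_fun lam b u r1)"
proof -
  define IA where "IA = (\<integral>\<^sup>+ x \<in> ball 0 r2 - ball 0 r1.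
      ennreal (a x powr (lam / (lam - 1)) * b x powr (- 1 / (lam - 1))) \<partial>lborel)"
  define J1 where "J1 = J_fun lam b u r1"
  define D where "D = J_fun lam b u r2 - J1"
  have loc: "loc_integrable (\<lambda>x. b x * \<bar>u x\<bar> powr lam)" using sol by (simp add: is_solution_def)
  have J1_0: "J1 \<ge> 0" unfolding J1_def by (rule J_fun_nonneg[OF b(2)])
  have D0: "D \<ge> 0" unfolding D_def J1_def using J_fun_mono[OF loc b(2), of r1 r2] r by simp
  have Nc0: "Nc \<ge> 0" unfolding Nc_def by simp
  have rhs0: "0 \<le> ((Nc + 1) * K) powr lam * sqrt \<sigma> powr (CARD('n) * (lam - 1)) * D" using D0 by simp
  consider "J1 = 0" | "IA = \<infinity>" | "J1 > 0" "IA \<noteq> \<infinity>" using J1_0 by force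
  then show ?thesis
  proof cases
    case 1
    then show ?thesis using rhs0 unfolding D_def J1_def by simp
  next
    case 2
    then have "h_fun lam \<sigma> a b r = 0"
      unfolding IA_def by (rule h_fun_annulus_bound(1)[OF lam sig r])
    then show ?thesis using rhs0 unfolding D_def J1_def by simp
  next
    case 3
    define T where "T = (K / (r2 - r1) ^ m) powr (lam / (lam - 1)) * enn2real IA"
    have est: "J1 \<le> Nc * (e / lam * D + (lam - 1) / lam * e powr (-1/(lam-1)) * T)" if "e > 0" for e
      unfolding J1_def D_def T_def Nc_def IA_def
      by (rule cutoff_energy_estimate[OF lam a b growth sol \<phi> _ _ _ that]) (use K r 3(2) in \<open>auto simp: IA_def\<close>)
    have T0: "T > 0"
      using eps_bound_nondegenerate(2)[OF lam 3(1) D0 _ Nc0 est] unfolding T_def by simp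
    then have IA0: "enn2real IA > 0" unfolding T_def using K r by (simp add: zero_less_mult_iff)
    show ?thesis
      unfolding J1_def[symmetric] D_def[symmetric]
    proof (rule energy_bound_rescale[OF lam J1_0 D0 IA0 K Nc0])
      show "J1 powr lam \<le> Nc powr lam * ((K / (r2 - r1) ^ m) powr (lam / (lam - 1)) * enn2real IA) powr (lam - 1) * D"
        using eps_bound_optimize[OF lam J1_0 eps_bound_nondegenerate(1)[OF lam 3(1) D0 _ Nc0 est] T0 Nc0 est]
          T0 unfolding T_def by simp
      show "h_fun lam \<sigma> a b r \<le> enn2real IA powr (1 - lam) * (sqrt \<sigma> * r1) powr (CARD('n) * (lam - 1))"
        using h_fun_annulus_bound(2)[OF lam sig r] IA0 unfolding IA_def by simp
    qed (use r sig in auto)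
  qed
qed

lemma J_fun_diff_ge_SUP:
  fixes aa :: "('n::finite \<Rightarrow> nat) \<Rightarrow> real^'n \<Rightarrow> real \<Rightarrow> real" and a b u \<phi> :: "real^'n \<Rightarrow> real"
    and m :: nat and lam \<sigma> K r1 r2 :: real
  defines "M \<equiv> ((real (card {\<alpha>::'n \<Rightarrow> nat. mi_order \<alpha> = m}) + 1) * K) powr lam
    * sqrt \<sigma> powr (CARD('n) * (lam - 1))"
  assumes lam: "lam > 1" and sig: "\<sigma> > 1"
    and a: "a \<in> borel_measurable lborel" "\<forall>x. a x > 0"
    and b: "b \<in> borel_measurable lborel" "\<forall>x. b x > 0"
    and growth: "\<forall>\<alpha>. mi_order \<alpha> = m \<longrightarrow> (AE x in lborel. \<forall>\<zeta>. \<bar>aa \<alpha> x \<zeta>\<bar> \<le> a x * \<bar>\<zeta>\<bar>)"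
    and sol: "is_solution m lam aa b u"
    and \<phi>: "admissible_cutoff m lam (K / (r2 - r1) ^ m) r1 r2 \<phi>" and K: "K > 0"
    and r: "0 < r1" "r1 < r2" "r2 \<le> sqrt \<sigma> * r1"
  shows "J_fun lam b u r2 - J_fun lam b u r1 \<ge> 1 / M * (r2 - r1) powr (lam * m) * r1 powr ((1 - lam) * CARD('n))
    * (SUP r\<in>{r1<..<r2}. h_fun lam \<sigma> a b r) * (J_fun lam b u r1) powr lam"
proof -
  define P where "P = (r2 - r1) powr (lam * m) * r1 powr ((1 - lam) * CARD('n))"
  have M: "M > 0" unfolding M_def using K sig by simp
  have "1 / M * (P * J_fun lam b u r1 powr lam) * h_fun lam \<sigma> a b r
      \<le> J_fun lam b u r2 - J_fun lam b u r1" if "r \<in> {r1<..<r2}" for r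
  proof -
    have "P * h_fun lam \<sigma> a b r * J_fun lam b u r1 powr lam \<le> M * (J_fun lam b u r2 - J_fun lam b u r1)"
      unfolding P_def M_def using r that
      by (intro J_fun_diff_lower_bound[OF lam sig a b growth sol \<phi> K]) auto
    then show ?thesis using M by (simp add: divide_le_eq mult_ac)
  qed
  moreover have "J_fun lam b u r1 \<le> J_fun lam b u r2"
    using J_fun_mono[of b u lam r1 r2] sol b r by (simp add: is_solution_def)
  ultimately have "1 / M * (P * J_fun lam b u r1 powr lam) * (SUP r\<in>{r1<..<r2}. h_fun lam \<sigma> a b r)
      \<le> J_fun lam b u r2 - J_fun lam b u r1"
    using r M by (intro mult_cSUP_le) (auto simp: P_def)
  then show ?thesis by (simp add: P_def mult_ac)
qed

theorem lemma3p1: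
  fixes m :: nat and lam \<sigma> :: real
  assumes "m \<ge> 1" and "lam > 1" and "\<sigma> > 1"
  shows "\<exists>C>0. \<forall>(aa :: ('n::finite \<Rightarrow> nat) \<Rightarrow> real^'n \<Rightarrow> real \<Rightarrow> real)
            (a :: real^'n \<Rightarrow> real) (b :: real^'n \<Rightarrow> real) (u :: real^'n \<Rightarrow> real) r1 r2.
     a \<in> borel_measurable lborel \<and> (\<forall>x. a x > 0) \<and>
     b \<in> borel_measurable lborel \<and> (\<forall>x. b x > 0) \<and>
     (\<forall>\<alpha>. mi_order \<alpha> = m \<longrightarrow> (AE x in lborel. \<forall>\<zeta>. \<bar>aa \<alpha> x \<zeta>\<bar> \<le> a x * \<bar>\<zeta>\<bar>)) \<and>
     is_solution m lam aa b u \<and>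
     0 < r1 \<and> r1 < r2 \<and> r2 \<le> sqrt \<sigma> * r1
     \<longrightarrow> J_fun lam b u r2 - J_fun lam b u r1 \<ge>
         C * (r2 - r1) powr (lam * m) * r1 powr ((1 - lam) * CARD('n))
           * (SUP r\<in>{r1<..<r2}. h_fun lam \<sigma> a b r) * (J_fun lam b u r1) powr lam"
proof -
  obtain K where K: "K > 0"
    and cutoff: "\<And>r1 r2. 0 < r1 \<Longrightarrow> r1 < r2 \<Longrightarrow> r2 \<le> sqrt \<sigma> * r1 \<Longrightarrow>
      \<exists>\<phi>::real^'n \<Rightarrow> real. admissible_cutoff m lam (K / (r2 - r1) ^ m) r1 r2 \<phi>"
    using admissible_cutoff_exists[OF assms] by blast
  define M where "M = ((real (card {\<alpha>::'n \<Rightarrow> nat. mi_order \<alpha> = m}) + 1) * K) powr lam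
    * sqrt \<sigma> powr (CARD('n) * (lam - 1))"
  have "M > 0" unfolding M_def using K assms(3) by simp
  then show ?thesis
  proof (intro exI[of _ "1 / M"] conjI allI impI)
    fix aa :: "('n \<Rightarrow> nat) \<Rightarrow> real^'n \<Rightarrow> real \<Rightarrow> real" and a b u :: "real^'n \<Rightarrow> real" and r1 r2 :: real
    assume H: "a \<in> borel_measurable lborel \<and> (\<forall>x. a x > 0) \<and> b \<in> borel_measurable lborel \<and> (\<forall>x. b x > 0) \<and>
      (\<forall>\<alpha>. mi_order \<alpha> = m \<longrightarrow> (AE x in lborel. \<forall>\<zeta>. \<bar>aa \<alpha> x \<zeta>\<bar> \<le> a x * \<bar>\<zeta>\<bar>)) \<and>
      is_solution m lam aa b u \<and> 0 < r1 \<and> r1 < r2 \<and> r2 \<le> sqrt \<sigma> * r1"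
    then obtain \<phi> :: "real^'n \<Rightarrow> real" where "admissible_cutoff m lam (K / (r2 - r1) ^ m) r1 r2 \<phi>"
      using cutoff by blast
    then show "J_fun lam b u r2 - J_fun lam b u r1 \<ge> 1 / M * (r2 - r1) powr (lam * m) * r1 powr ((1 - lam) * CARD('n))
        * (SUP r\<in>{r1<..<r2}. h_fun lam \<sigma> a b r) * (J_fun lam b u r1) powr lam"
      unfolding M_def using H K by (intro J_fun_diff_ge_SUP[OF assms(2,3)]) auto
  qed simp
qed
end
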